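(* Consider the FedAvg round $t$ with coordinate-wise REED aggregation (defined in the context) with $M\ge1$ chips and deterministic weights $c_1,\dots,c_M\ge0$, $C_M=\sum_m c_m>0$, and let $\varepsilon^t=\widehat\Delta^t-\bar\Delta^t$. Then $$\mathbb{E}[\varepsilon^t\mid\mathcal{F}_t,\{\Delta_k^t\}_{k=1}^K]=0,\qquad\mathbb{E}[\varepsilon^t\mid\mathcal{F}_t]=0.$$ Moreover, if $\|g_{k,q}^t\|\le G$ almost surely for all $k,q$ (so that $\|\Delta_k^t\|\le\beta QG$), then $\mathbb{E}\|\varepsilon^t\|^2\le\sigma_{\mathrm{air}}^2$, where for $M=1$, $c_1=1$ one may take $$\sigma_{\mathrm{air}}^2=(\beta QG)^2+\frac{2\sigma_z^2\sqrt d}{\eta}(\beta QG)+\frac{2d\sigma_z^4}{\eta^2},$$ and for general $M$ and weights $\{c_m\}$ one may take $$\sigma_{\mathrm{air}}^2=\frac{\sum_{m=1}^Mc_m^2}{C_M^2}(\beta QG)^2+\frac{2\sigma_z^2\sqrt d}{\eta C_M}(\beta QG)+\frac{2dM\sigma_z^4}{\eta^2C_M^2}.$$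
   Context: FedAvg setup: $K$ clients, model dimension $d$; at round $t$ the server holds $w^t\in\mathbb{R}^d$, each client sets $w_{k,0}^t=w^t$ and runs $w_{k,q+1}^t=w_{k,q}^t-\beta g_{k,q}^t$, $q=0,\dots,Q-1$, with stepsize $\beta>0$ and stochastic gradients $g_{k,q}^t$. Local increment $\Delta_k^t=w_{k,Q}^t-w^t=-\beta\sum_q g_{k,q}^t$; ideal aggregate $\bar\Delta^t=\frac1K\sum_k\Delta_k^t$. $\mathcal{F}_t$ is the sigma-field generated by the global model and all randomness up to the beginning of round $t$. Coordinate-wise REED aggregation: fix $\eta>0$, $\sigma_z^2>0$, $\mu_1,\dots,\mu_K>0$. For each coordinate $j=1,\dots,d$ set $u_{k,j}^t=\frac1K[\Delta_k^t]_j$ and $[x]_+=\max\{x,0\}$, $[x]_-=\max\{-x,0\}$. On chip $m$ and branch $\pm$, client $k$ transmits $a_{k,j,m,\pm}^t=\frac{\sqrt{\eta c_m[u_{k,j}^t]_\pm}}{\mu_k}e^{\mathrm{i}\phi_{k,j,m,\pm}^t}$; the receiver observes $y_{j,m,\pm}^t=\sum_{k=1}^K h_{k,j,m,\pm}^t a_{k,j,m,\pm}^t+z_{j,m,\pm}^t$ and sets $[\widehat\Delta^t]_j=\frac{1}{\eta C_M}\sum_{m=1}^M(|y_{j,m,+}^t|^2-|y_{j,m,-}^t|^2)$. Here $h_{k,j,m,\pm}^t\sim\mathcal{CN}(0,\mu_k^2)$, $z_{j,m,\pm}^t\sim\mathcal{CN}(0,\sigma_z^2)$, $\phi_{k,j,m,\pm}^t\sim\mathrm{Unif}[0,2\pi)$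 are mutually independent across all indices and independent of $\mathcal{F}_t$ and of the local increments $\{\Delta_k^t\}$. $\mathcal{CN}(0,\nu)$ is the circularly symmetric complex Gaussian with variance $\nu$. *)

theory Defs
  imports "HOL-Probability.Probability"
begin

text \<open>Positive and negative parts: [x]_+ = max x 0, [x]_- = max (-x) 0.
  Branch '+' is encoded by True, branch '-' by False.\<close>

definition ppart :: "real \<Rightarrow> real" where "ppart x = max x 0"
definition npart :: "real \<Rightarrow> real" where "npart x = max (- x) 0"

definition branch_part :: "bool \<Rightarrow> real \<Rightarrow> real" where
  "branch_part b x = (if b then ppart x else npart x)"

definition cgauss_density :: "real \<Rightarrow> complex \<Rightarrow> real" where
  "cgauss_density nu w = exp (- (cmod w)\<^sup>2 / nu) / (pi * nu)"

definition is_CN :: "'a measure \<Rightarrow> real \<Rightarrow> ('a \<Rightarrow> complex) \<Rightarrow> bool" where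
  "is_CN M nu X \<longleftrightarrow> distributed M lborel X (\<lambda>w. ennreal (cgauss_density nu w))"

definition is_unif_phase :: "'a measure \<Rightarrow> ('a \<Rightarrow> real) \<Rightarrow> bool" where
  "is_unif_phase M X \<longleftrightarrow>
     distributed M lborel X (\<lambda>x. ennreal (indicator {0..<2*pi} x / (2*pi)))"

text \<open>Local increment Delta_k = w_{k,Q} - w = - beta * sum_{q<Q} g_{k,q}.\<close>
definition local_incr :: "real \<Rightarrow> nat \<Rightarrow> (nat \<Rightarrow> nat \<Rightarrow> 'a \<Rightarrow> real^'d) \<Rightarrow> nat \<Rightarrow> 'a \<Rightarrow> real^'d" where
  "local_incr \<beta> Q g k \<omega> = - \<beta> *\<^sub>R (\<Sum>q<Q. g k q \<omega>)"

definition ideal_agg :: "nat \<Rightarrow> (nat \<Rightarrow> 'a \<Rightarrow> real^'d) \<Rightarrow> 'a \<Rightarrow> real^'d" where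
  "ideal_agg K \<Delta> \<omega> = (1 / real K) *\<^sub>R (\<Sum>k<K. \<Delta> k \<omega>)"

definition reed_tx ::
  "real \<Rightarrow> (nat \<Rightarrow> real) \<Rightarrow> (nat \<Rightarrow> real) \<Rightarrow> nat \<Rightarrow> (nat \<Rightarrow> 'a \<Rightarrow> real^'d)
   \<Rightarrow> (nat \<Rightarrow> 'd \<Rightarrow> nat \<Rightarrow> bool \<Rightarrow> 'a \<Rightarrow> real)
   \<Rightarrow> nat \<Rightarrow> 'd \<Rightarrow> nat \<Rightarrow> bool \<Rightarrow> 'a \<Rightarrow> complex" where
  "reed_tx \<eta> c \<mu> K \<Delta> \<phi> k j m b \<omega> =
     complex_of_real (sqrt (\<eta> * c m * branch_part b ((1 / real K) * (\<Delta> k \<omega> $ j))) / \<mu> k)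
       * cis (\<phi> k j m b \<omega>)"

definition reed_rx ::
  "real \<Rightarrow> (nat \<Rightarrow> real) \<Rightarrow> (nat \<Rightarrow> real) \<Rightarrow> nat \<Rightarrow> (nat \<Rightarrow> 'a \<Rightarrow> real^'d)
   \<Rightarrow> (nat \<Rightarrow> 'd \<Rightarrow> nat \<Rightarrow> bool \<Rightarrow> 'a \<Rightarrow> complex)
   \<Rightarrow> ('d \<Rightarrow> nat \<Rightarrow> bool \<Rightarrow> 'a \<Rightarrow> complex)
   \<Rightarrow> (nat \<Rightarrow> 'd \<Rightarrow> nat \<Rightarrow> bool \<Rightarrow> 'a \<Rightarrow> real)
   \<Rightarrow> 'd \<Rightarrow> nat \<Rightarrow> bool \<Rightarrow> 'a \<Rightarrow> complex" where
  "reed_rx \<eta> c \<mu> K \<Delta> h z \<phi> j m b \<omega> =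
     (\<Sum>k<K. h k j m b \<omega> * reed_tx \<eta> c \<mu> K \<Delta> \<phi> k j m b \<omega>) + z j m b \<omega>"

definition reed_est ::
  "real \<Rightarrow> nat \<Rightarrow> (nat \<Rightarrow> real) \<Rightarrow> (nat \<Rightarrow> real) \<Rightarrow> nat \<Rightarrow> (nat \<Rightarrow> 'a \<Rightarrow> real^'d)
   \<Rightarrow> (nat \<Rightarrow> 'd \<Rightarrow> nat \<Rightarrow> bool \<Rightarrow> 'a \<Rightarrow> complex)
   \<Rightarrow> ('d \<Rightarrow> nat \<Rightarrow> bool \<Rightarrow> 'a \<Rightarrow> complex)
   \<Rightarrow> (nat \<Rightarrow> 'd \<Rightarrow> nat \<Rightarrow> bool \<Rightarrow> 'a \<Rightarrow> real)
   \<Rightarrow> 'a \<Rightarrow> real^'d" where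
  "reed_est \<eta> M c \<mu> K \<Delta> h z \<phi> \<omega> =
     (\<chi> j. (1 / (\<eta> * (\<Sum>m<M. c m))) *
        (\<Sum>m<M. (cmod (reed_rx \<eta> c \<mu> K \<Delta> h z \<phi> j m True \<omega>))\<^sup>2
                - (cmod (reed_rx \<eta> c \<mu> K \<Delta> h z \<phi> j m False \<omega>))\<^sup>2))"

datatype 'd noise_idx = Hidx nat 'd nat bool | Zidx 'd nat bool | Phidx nat 'd nat bool

definition noise_idx_set :: "nat \<Rightarrow> nat \<Rightarrow> 'd noise_idx set" where
  "noise_idx_set K M =
     {Hidx k j m b | k j m b. k < K \<and> m < M} \<union> {Zidx j m b | j m b. m < M}
     \<union> {Phidx k j m b | k j m b. k < K \<and> m < M}"

text \<open>All channel random variables as one complex-valued family (phases embedded into C).\<close>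
fun noise_family ::
  "(nat \<Rightarrow> 'd \<Rightarrow> nat \<Rightarrow> bool \<Rightarrow> 'a \<Rightarrow> complex) \<Rightarrow> ('d \<Rightarrow> nat \<Rightarrow> bool \<Rightarrow> 'a \<Rightarrow> complex)
   \<Rightarrow> (nat \<Rightarrow> 'd \<Rightarrow> nat \<Rightarrow> bool \<Rightarrow> 'a \<Rightarrow> real) \<Rightarrow> 'd noise_idx \<Rightarrow> 'a \<Rightarrow> complex" where
  "noise_family h z \<phi> (Hidx k j m b) = h k j m b"
| "noise_family h z \<phi> (Zidx j m b) = z j m b"
| "noise_family h z \<phi> (Phidx k j m b) = (\<lambda>\<omega>. complex_of_real (\<phi> k j m b \<omega>))"

definition cond_field :: "'a measure \<Rightarrow> 'a measure \<Rightarrow> nat \<Rightarrow> (nat \<Rightarrow> 'a \<Rightarrow> real^'d) \<Rightarrow> 'a measure" where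
  "cond_field M Ft K \<Delta> =
     sigma (space M) (sets Ft \<union> {\<Delta> k -` A \<inter> space M | k A. k < K \<and> A \<in> sets borel})"

end

theory Submission
  imports Defs
begin

text \<open>
  Freeze the client increments at a value \<open>\<delta>\<close>, writing \<open>u\<^sub>k = \<delta>\<^sub>k\<^sub>j / K\<close>. A received signal
  \<open>y\<close> (coordinate \<open>j\<close>, chip \<open>m\<close>, branch \<open>\<plusminus>\<close>) is then a sum of independent circularly symmetric
  terms, namely the faded symbols \<open>h a\<close> (Gaussian fading times an independent phase) and Gaussian
  noise. So \<open>y\<close> has the second and fourth moments of \<open>CN(0, \<lambda>)\<close> with
  \<open>\<lambda>\<^sub>\<plusminus> = \<eta> c\<^sub>m \<Sum>\<^sub>k [u\<^sub>k]\<^sub>\<plusminus> + \<sigma>\<^sub>z\<^sup>2\<close>, i.e. \<open>E|y|\<^sup>2 = \<lambda>\<close> and \<open>E|y|\<^sup>4 = 2\<lambda>\<^sup>2\<close>.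
  As \<open>\<lambda>\<^sub>+ - \<lambda>\<^sub>- = \<eta> c\<^sub>m \<Sum>\<^sub>k u\<^sub>k\<close>, the estimate is unbiased. The \<open>2M\<close> centred terms
  \<open>\<plusminus>(|y|\<^sup>2 - \<lambda>)\<close> depend on disjoint groups of channel variables, hence are independent with
  variance \<open>\<lambda>\<^sup>2\<close>; \<open>\<lambda>\<^sub>+ + \<lambda>\<^sub>- = \<eta> c\<^sub>m \<Sum>\<^sub>k |u\<^sub>k| + 2\<sigma>\<^sub>z\<^sup>2\<close> and Cauchy-Schwarz over clients and
  coordinates then bound the mean squared error.
  Since the channel is independent of the \<open>\<sigma>\<close>-field generated by \<open>F\<^sub>t\<close> and the increments,
  integrating over the channel with the increments frozen gives the conditional statements.
\<close>

section \<open>Circularly symmetric complex Gaussians\<close>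

lemma measurable_Complex [measurable]:
  "(\<lambda>(x, y). Complex x y) \<in> borel_measurable (lborel \<Otimes>\<^sub>M lborel)"
  unfolding Complex_eq by measurable

lemma lborel_complex_eq_distr_Complex:
  "(lborel :: complex measure) = distr (lborel \<Otimes>\<^sub>M lborel) borel (\<lambda>(x, y). Complex x y)"
proof (rule lborel_eqI)
  fix l u :: complex
  assume lu: "\<And>b. b \<in> Basis \<Longrightarrow> l \<bullet> b \<le> u \<bullet> b"
  have le: "Re l \<le> Re u" "Im l \<le> Im u"
    using lu[of 1] lu[of \<i>] by (auto simp: Basis_complex_def)
  have "(\<lambda>(x, y). Complex x y) -` box l u \<inter> space (lborel \<Otimes>\<^sub>M lborel) =
      {Re l<..<Re u} \<times> {Im l<..<Im u}"
    by (auto simp: box_def Basis_complex_def space_pair_measure)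
  then show "emeasure (distr (lborel \<Otimes>\<^sub>M lborel) borel (\<lambda>(x, y). Complex x y)) (box l u) =
      (\<Prod>b\<in>Basis. (u - l) \<bullet> b)"
    using le by (simp add: emeasure_distr lborel.emeasure_pair_measure_Times Basis_complex_def
        ennreal_mult inner_complex_def)
qed simp

lemma cgauss_density_Complex:
  assumes "\<nu> > 0"
  shows "cgauss_density \<nu> (Complex x y) =
    normal_density 0 (sqrt (\<nu> / 2)) x * normal_density 0 (sqrt (\<nu> / 2)) y"
proof -
  have "normal_density 0 (sqrt (\<nu> / 2)) x * normal_density 0 (sqrt (\<nu> / 2)) y
     = (1 / sqrt (pi * \<nu>)) * (1 / sqrt (pi * \<nu>)) * (exp (- x\<^sup>2 / \<nu>) * exp (- y\<^sup>2 / \<nu>))"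
    using assms unfolding normal_density_def by (simp add: field_simps)
  also have "\<dots> = exp (- (x\<^sup>2 + y\<^sup>2) / \<nu>) / (pi * \<nu>)"
    using assms by (simp add: exp_add[symmetric] field_simps real_sqrt_mult[symmetric])
  finally show ?thesis
    unfolding cgauss_density_def by (simp add: cmod_power2)
qed

lemma (in prob_space) distr_pair_snd: 
  assumes "sigma_finite_measure N"
  shows "distr (M \<Otimes>\<^sub>M N) N snd = N"
proof (intro measure_eqI)
  interpret N: sigma_finite_measure N by fact
  interpret pair_sigma_finite M N ..
  fix A assume A: "A \<in> sets (distr (M \<Otimes>\<^sub>M N) N snd)"
  then have "emeasure (distr (M \<Otimes>\<^sub>M N) N snd) A = emeasure (M \<Otimes>\<^sub>M N) (space M \<times> A)"
    by (auto simp: emeasure_distr space_pair_measure dest: sets.sets_into_space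
        intro!: arg_cong2[where f=emeasure])
  with A show "emeasure (distr (M \<Otimes>\<^sub>M N) N snd) A = emeasure N A"
    by (simp add: N.emeasure_pair_measure_Times emeasure_space_1)
qed simp

lemma distr_Re_Im_is_CN:
  assumes "is_CN M \<nu> X" and "\<nu> > 0"
  defines "D \<equiv> density lborel (normal_density 0 (sqrt (\<nu> / 2)))"
  shows "distr M (lborel \<Otimes>\<^sub>M lborel) (\<lambda>\<omega>. (Re (X \<omega>), Im (X \<omega>))) = D \<Otimes>\<^sub>M D"
proof -
  let ?f = "\<lambda>w. ennreal (cgauss_density \<nu> w)" and ?C = "\<lambda>(x, y). Complex x y"
  have D: "distr M lborel X = density lborel ?f" and [measurable]: "X \<in> borel_measurable M"
    and [measurable]: "?f \<in> borel_measurable lborel"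
    using assms(1) by (auto simp: is_CN_def distributed_def)
  interpret D: prob_space D
    unfolding D_def using prob_space_normal_density \<open>\<nu> > 0\<close> by simp
  have "distr M (lborel \<Otimes>\<^sub>M lborel) (\<lambda>\<omega>. (Re (X \<omega>), Im (X \<omega>)))
        = distr (distr M lborel X) (lborel \<Otimes>\<^sub>M lborel) (\<lambda>w. (Re w, Im w))"
    by (subst distr_distr) (auto simp: comp_def)
  also have "\<dots> = distr (density (distr (lborel \<Otimes>\<^sub>M lborel) borel ?C) ?f) (lborel \<Otimes>\<^sub>M lborel) (\<lambda>w. (Re w, Im w))"
    unfolding D by (subst (1) lborel_complex_eq_distr_Complex) simp
  also have "\<dots> = density (lborel \<Otimes>\<^sub>M lborel) (\<lambda>p. ?f (?C p))"
    by (subst density_distr) (auto simp: distr_distr comp_def split_beta intro!: distr_id2)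
  also have "\<dots> = density (lborel \<Otimes>\<^sub>M lborel)
      (\<lambda>(x, y). ennreal (normal_density 0 (sqrt (\<nu> / 2)) x) * ennreal (normal_density 0 (sqrt (\<nu> / 2)) y))"
    using \<open>\<nu> > 0\<close> by (intro density_cong) (auto simp: cgauss_density_Complex ennreal_mult split_beta)
  also have "\<dots> = D \<Otimes>\<^sub>M D"
    unfolding D_def
    by (rule pair_measure_density[symmetric])
       (auto simp: lborel.sigma_finite_measure_axioms D.sigma_finite_measure_axioms[unfolded D_def])
  finally show ?thesis .
qed

lemma cmod_power4: "(cmod z)^4 = ((Re z)\<^sup>2 + (Im z)\<^sup>2)\<^sup>2"
  by (simp flip: cmod_power2 power_mult)

text \<open>The moments up to order four of \<open>CN(0, s)\<close>. They are all that the variance computation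
  needs, and unlike the Gaussian law itself they survive the operations that build a received
  signal: independent sums, real scaling and multiplication by an independent unit phase.\<close>

definition circular_moments :: "'a measure \<Rightarrow> ('a \<Rightarrow> complex) \<Rightarrow> real \<Rightarrow> bool" where
  "circular_moments M X s \<longleftrightarrow> X \<in> borel_measurable M \<and> integrable M (\<lambda>\<omega>. (cmod (X \<omega>))^4) \<and>
     (\<integral>\<omega>. Re (X \<omega>) \<partial>M) = 0 \<and> (\<integral>\<omega>. Im (X \<omega>) \<partial>M) = 0 \<and>
     (\<integral>\<omega>. (Re (X \<omega>))\<^sup>2 \<partial>M) = s / 2 \<and> (\<integral>\<omega>. (Im (X \<omega>))\<^sup>2 \<partial>M) = s / 2 \<and>
     (\<integral>\<omega>. Re (X \<omega>) * Im (X \<omega>) \<partial>M) = 0 \<and> (\<integral>\<omega>. (cmod (X \<omega>))^4 \<partial>M) = 2 * s\<^sup>2"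

definition quartic_growth :: "(complex \<Rightarrow> real) \<Rightarrow> bool" where
  "quartic_growth f \<longleftrightarrow> f \<in> borel_measurable borel \<and> (\<exists>n\<le>4. \<forall>z. \<bar>f z\<bar> \<le> cmod z ^ n)"

lemma quartic_growthI:
  assumes "f \<in> borel_measurable borel" and "\<And>z. \<bar>f z\<bar> \<le> cmod z ^ n" and "n \<le> 4"
  shows "quartic_growth f"
  using assms unfolding quartic_growth_def by blast

lemma quartic_growth_monomials [simp]:
  "quartic_growth Re" "quartic_growth Im"
  "quartic_growth (\<lambda>z. (Re z)\<^sup>2)" "quartic_growth (\<lambda>z. (Im z)\<^sup>2)" "quartic_growth (\<lambda>z. Re z * Im z)"
  "quartic_growth (\<lambda>z. (cmod z)\<^sup>2)" "quartic_growth (\<lambda>z. (cmod z)\<^sup>2 * Re z)"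
  "quartic_growth (\<lambda>z. (cmod z)\<^sup>2 * Im z)" "quartic_growth (\<lambda>z. (cmod z)^4)"
proof -
  have Re: "\<bar>Re z\<bar> \<le> cmod z ^ 1" and Im: "\<bar>Im z\<bar> \<le> cmod z ^ 1" for z
    by (simp_all add: abs_Re_le_cmod abs_Im_le_cmod)
  have Re2: "\<bar>(Re z)\<^sup>2\<bar> \<le> cmod z ^ 2" and Im2: "\<bar>(Im z)\<^sup>2\<bar> \<le> cmod z ^ 2" for z
    using cmod_power2[of z] by simp_all
  have Re_Im: "\<bar>Re z * Im z\<bar> \<le> cmod z ^ 2" for z
    using mult_mono[OF abs_Re_le_cmod abs_Im_le_cmod] by (simp add: abs_mult power2_eq_square)
  have norm_Re: "\<bar>(cmod z)\<^sup>2 * Re z\<bar> \<le> cmod z ^ 3" and norm_Im: "\<bar>(cmod z)\<^sup>2 * Im z\<bar> \<le> cmod z ^ 3" for z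
    using mult_left_mono[OF abs_Re_le_cmod, of "(cmod z)\<^sup>2" z] mult_left_mono[OF abs_Im_le_cmod, of "(cmod z)\<^sup>2" z]
    by (simp_all add: abs_mult power2_eq_square power3_eq_cube)
  have norm2: "\<bar>(cmod z)\<^sup>2\<bar> \<le> cmod z ^ 2" and norm4: "\<bar>(cmod z)^4\<bar> \<le> cmod z ^ 4" for z
    by simp_all
  show "quartic_growth Re" "quartic_growth Im"
    "quartic_growth (\<lambda>z. (Re z)\<^sup>2)" "quartic_growth (\<lambda>z. (Im z)\<^sup>2)" "quartic_growth (\<lambda>z. Re z * Im z)"
    "quartic_growth (\<lambda>z. (cmod z)\<^sup>2)" "quartic_growth (\<lambda>z. (cmod z)\<^sup>2 * Re z)"
    "quartic_growth (\<lambda>z. (cmod z)\<^sup>2 * Im z)" "quartic_growth (\<lambda>z. (cmod z)^4)"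
    by (auto intro!: quartic_growthI[OF _ Re] quartic_growthI[OF _ Im] quartic_growthI[OF _ Re2]
          quartic_growthI[OF _ Im2] quartic_growthI[OF _ Re_Im] quartic_growthI[OF _ norm2]
          quartic_growthI[OF _ norm_Re] quartic_growthI[OF _ norm_Im] quartic_growthI[OF _ norm4])
qed

context prob_space
begin

lemma circular_moments_integrable:
  assumes "circular_moments M X s" and "quartic_growth f"
  shows "integrable M (\<lambda>\<omega>. f (X \<omega>))"
proof -
  obtain n where n: "n \<le> 4" and bound: "\<And>z. \<bar>f z\<bar> \<le> cmod z ^ n" and [measurable]: "f \<in> borel_measurable borel"
    using assms(2) unfolding quartic_growth_def by blast
  have [measurable]: "X \<in> borel_measurable M"
    using assms(1) by (simp add: circular_moments_def)
  have "integrable M (\<lambda>\<omega>. 1 + (cmod (X \<omega>))^4)"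
    using assms(1) by (simp add: circular_moments_def)
  then show ?thesis
  proof (rule Bochner_Integration.integrable_bound)
    have "cmod z ^ n \<le> 1 + cmod z ^ 4" for z
    proof (cases "cmod z \<le> 1")
      case True
      then show ?thesis
        using power_le_one[of "cmod z" n] by (simp add: add_increasing2)
    next
      case False
      then have "cmod z ^ n \<le> cmod z ^ 4"
        by (intro power_increasing[OF n]) simp
      then show ?thesis
        by simp
    qed
    then show "AE \<omega> in M. norm (f (X \<omega>)) \<le> norm (1 + (cmod (X \<omega>))^4)"
      using bound by (auto intro: order_trans)
  qed measurable
qed

lemma circular_moments_norm:
  assumes "circular_moments M X s"
  shows "integrable M (\<lambda>\<omega>. (cmod (X \<omega>))\<^sup>2)" "(\<integral>\<omega>. (cmod (X \<omega>))\<^sup>2 \<partial>M) = s"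
    "integrable M (\<lambda>\<omega>. (cmod (X \<omega>))^4)" "(\<integral>\<omega>. (cmod (X \<omega>))^4 \<partial>M) = 2 * s\<^sup>2"
  using assms circular_moments_integrable[OF assms, of "\<lambda>z. (Re z)\<^sup>2"]
    circular_moments_integrable[OF assms, of "\<lambda>z. (Im z)\<^sup>2"]
  by (simp_all add: circular_moments_def cmod_power2)

lemma has_bochner_integral_indep_var_mult:
  fixes f g :: "'b::topological_space \<Rightarrow> real"
  assumes "indep_var borel X borel Z"
    and "f \<in> borel_measurable borel" "g \<in> borel_measurable borel"
    and "integrable M (\<lambda>\<omega>. f (X \<omega>))" "integrable M (\<lambda>\<omega>. g (Z \<omega>))"
  shows "has_bochner_integral M (\<lambda>\<omega>. f (X \<omega>) * g (Z \<omega>))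
           ((\<integral>\<omega>. f (X \<omega>) \<partial>M) * (\<integral>\<omega>. g (Z \<omega>) \<partial>M))"
proof -
  have indep: "indep_var borel (f \<circ> X) borel (g \<circ> Z)"
    using assms(1-3) by (rule indep_var_compose)
  show ?thesis
    using indep_var_lebesgue_integral[OF indep] indep_var_integrable[OF indep] assms(4,5)
    by (simp add: has_bochner_integral_iff comp_def)
qed

lemma is_CN_Re_Im:
  assumes X: "is_CN M \<nu> X" and "\<nu> > 0"
  defines "\<sigma> \<equiv> sqrt (\<nu> / 2)"
  shows "distributed M lborel (\<lambda>\<omega>. Re (X \<omega>)) (\<lambda>x. ennreal (normal_density 0 \<sigma> x))"
    and "distributed M lborel (\<lambda>\<omega>. Im (X \<omega>)) (\<lambda>x. ennreal (normal_density 0 \<sigma> x))"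
    and "indep_var borel (\<lambda>\<omega>. Re (X \<omega>)) borel (\<lambda>\<omega>. Im (X \<omega>))"
proof -
  define D where "D = density lborel (\<lambda>x. ennreal (normal_density 0 \<sigma> x))"
  interpret D: prob_space D
    unfolding D_def \<sigma>_def using prob_space_normal_density \<open>\<nu> > 0\<close> by simp
  have [measurable]: "X \<in> borel_measurable M"
    using X by (auto simp: is_CN_def distributed_def)
  have joint: "distr M (lborel \<Otimes>\<^sub>M lborel) (\<lambda>\<omega>. (Re (X \<omega>), Im (X \<omega>))) = D \<Otimes>\<^sub>M D"
    using distr_Re_Im_is_CN[OF X \<open>\<nu> > 0\<close>] unfolding D_def \<sigma>_def .
  have Re: "distr M lborel (\<lambda>\<omega>. Re (X \<omega>)) = D"
  proof -
    have "distr M lborel (\<lambda>\<omega>. Re (X \<omega>)) = distr (D \<Otimes>\<^sub>M D) lborel fst"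
      by (simp add: joint[symmetric] distr_distr comp_def)
    also have "\<dots> = D"
      using D.distr_pair_fst[of D] by (simp add: D_def cong: distr_cong)
    finally show ?thesis .
  qed
  have Im: "distr M lborel (\<lambda>\<omega>. Im (X \<omega>)) = D"
  proof -
    have "distr M lborel (\<lambda>\<omega>. Im (X \<omega>)) = distr (D \<Otimes>\<^sub>M D) lborel snd"
      by (simp add: joint[symmetric] distr_distr comp_def)
    also have "\<dots> = D"
      using D.distr_pair_snd[OF D.sigma_finite_measure_axioms] by (simp add: D_def cong: distr_cong)
    finally show ?thesis .
  qed
  show "distributed M lborel (\<lambda>\<omega>. Re (X \<omega>)) (\<lambda>x. ennreal (normal_density 0 \<sigma> x))"
    and "distributed M lborel (\<lambda>\<omega>. Im (X \<omega>)) (\<lambda>x. ennreal (normal_density 0 \<sigma> x))"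
    using Re Im by (auto simp: distributed_def D_def)
  have "indep_var lborel (\<lambda>\<omega>. Re (X \<omega>)) lborel (\<lambda>\<omega>. Im (X \<omega>))"
    using joint Re Im by (subst indep_var_distribution_eq) auto
  then show "indep_var borel (\<lambda>\<omega>. Re (X \<omega>)) borel (\<lambda>\<omega>. Im (X \<omega>))"
    by (simp add: indep_var_eq)
qed

lemma is_CN_circular_moments:
  assumes X: "is_CN M \<nu> X" and "\<nu> > 0"
  shows "circular_moments M X \<nu>"
proof -
  define \<sigma> where "\<sigma> = sqrt (\<nu> / 2)"
  have \<sigma>: "\<sigma> > 0" and \<nu>: "\<nu> = 2 * \<sigma>\<^sup>2"
    using \<open>\<nu> > 0\<close> by (auto simp: \<sigma>_def)
  note Re = is_CN_Re_Im(1)[OF assms, folded \<sigma>_def] and Im = is_CN_Re_Im(2)[OF assms, folded \<sigma>_def]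
    and indep = is_CN_Re_Im(3)[OF assms]
  have [measurable]: "X \<in> borel_measurable M"
    using X by (auto simp: is_CN_def distributed_def)
  have moment: "has_bochner_integral M (\<lambda>\<omega>. (Re (X \<omega>))^k) (\<integral>x. normal_density 0 \<sigma> x * x^k \<partial>lborel)
           \<and> has_bochner_integral M (\<lambda>\<omega>. (Im (X \<omega>))^k) (\<integral>x. normal_density 0 \<sigma> x * x^k \<partial>lborel)" for k
    using integrable_normal_moment[of \<sigma> 0 k] \<sigma>
      distributed_integrable[OF Re, of "\<lambda>x. x^k"] distributed_integral[OF Re, of "\<lambda>x. x^k"]
      distributed_integrable[OF Im, of "\<lambda>x. x^k"] distributed_integral[OF Im, of "\<lambda>x. x^k"]
    by (simp add: has_bochner_integral_iff)
  have m1: "(\<integral>x. normal_density 0 \<sigma> x * x^1 \<partial>lborel) = 0"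
    using integral_normal_moment_odd[where k=0 and \<mu>=0 and \<sigma>=\<sigma>] \<sigma> by simp
  have m2: "(\<integral>x. normal_density 0 \<sigma> x * x^2 \<partial>lborel) = \<nu> / 2"
    using integral_normal_moment_even[where k=1 and \<mu>=0 and \<sigma>=\<sigma>] \<sigma>
    by (simp add: \<nu> field_simps power2_eq_square)
  have m4: "(\<integral>x. normal_density 0 \<sigma> x * x^4 \<partial>lborel) = 3 * (\<nu> / 2)\<^sup>2"
    using integral_normal_moment_even[where k=2 and \<mu>=0 and \<sigma>=\<sigma>] \<sigma>
    by (simp add: \<nu> numeral_eq_Suc fact_numeral field_simps)
  have Re1: "has_bochner_integral M (\<lambda>\<omega>. Re (X \<omega>)) 0"
    and Im1: "has_bochner_integral M (\<lambda>\<omega>. Im (X \<omega>)) 0"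
    using moment[of 1] m1 by simp_all
  have Re2: "has_bochner_integral M (\<lambda>\<omega>. (Re (X \<omega>))\<^sup>2) (\<nu> / 2)"
    and Im2: "has_bochner_integral M (\<lambda>\<omega>. (Im (X \<omega>))\<^sup>2) (\<nu> / 2)"
    using moment[of 2] m2 by simp_all
  have Re_Im: "has_bochner_integral M (\<lambda>\<omega>. Re (X \<omega>) * Im (X \<omega>)) 0"
    using has_bochner_integral_indep_var_mult[OF indep, of "\<lambda>x. x" "\<lambda>x. x"] Re1 Im1
    by (simp add: has_bochner_integral_iff)
  have Re2_Im2: "has_bochner_integral M (\<lambda>\<omega>. (Re (X \<omega>))\<^sup>2 * (Im (X \<omega>))\<^sup>2) ((\<nu> / 2) * (\<nu> / 2))"
    using has_bochner_integral_indep_var_mult[OF indep, of "\<lambda>x. x^2" "\<lambda>x. x^2"] Re2 Im2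
    by (simp add: has_bochner_integral_iff has_bochner_integral_integral_eq[OF Re2]
        has_bochner_integral_integral_eq[OF Im2])
  have "(cmod (X \<omega>))^4 = (Re (X \<omega>))^4 + 2 * ((Re (X \<omega>))\<^sup>2 * (Im (X \<omega>))\<^sup>2) + (Im (X \<omega>))^4" for \<omega>
    unfolding cmod_power4 by (simp add: power2_eq_square power4_eq_xxxx algebra_simps)
  then have "has_bochner_integral M (\<lambda>\<omega>. (cmod (X \<omega>))^4) (2 * \<nu>\<^sup>2)"
    using has_bochner_integral_add[OF has_bochner_integral_add[OF conjunct1[OF moment[of 4]]
          has_bochner_integral_mult_right[OF Re2_Im2, of 2]] conjunct2[OF moment[of 4]]] m4
    by (simp add: power2_eq_square field_simps)
  then show ?thesis
    unfolding circular_moments_def using Re1 Im1 Re2 Im2 Re_Im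
    by (auto simp: has_bochner_integral_iff)
qed

lemma has_bochner_integral_circular:
  assumes "circular_moments M X s" and "quartic_growth f"
  shows "has_bochner_integral M (\<lambda>\<omega>. f (X \<omega>)) (\<integral>\<omega>. f (X \<omega>) \<partial>M)"
  using circular_moments_integrable[OF assms] by (simp add: has_bochner_integral_iff)

lemma has_bochner_integral_circular_mult:
  assumes X: "circular_moments M X s" and Z: "circular_moments M Z t"
    and indep: "indep_var borel X borel Z" and "quartic_growth f" "quartic_growth g"
  shows "has_bochner_integral M (\<lambda>\<omega>. f (X \<omega>) * g (Z \<omega>)) ((\<integral>\<omega>. f (X \<omega>) \<partial>M) * (\<integral>\<omega>. g (Z \<omega>) \<partial>M))"
  using assms(4,5) circular_moments_integrable[OF X] circular_moments_integrable[OF Z]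
  by (intro has_bochner_integral_indep_var_mult[OF indep]) (auto simp: quartic_growth_def)

lemma has_bochner_integral_norm_add_power4:
  assumes X: "circular_moments M X s" and Z: "circular_moments M Z t"
    and indep: "indep_var borel X borel Z"
  shows "has_bochner_integral M (\<lambda>\<omega>. (cmod (X \<omega> + Z \<omega>))^4) (2 * (s + t)\<^sup>2)"
proof -
  note EX = has_bochner_integral_circular[OF X] and EZ = has_bochner_integral_circular[OF Z]
    and E = has_bochner_integral_circular_mult[OF X Z indep]
  note moments = X[unfolded circular_moments_def] Z[unfolded circular_moments_def]
    circular_moments_norm(2,4)[OF X] circular_moments_norm(2,4)[OF Z]
  note add = has_bochner_integral_add and mult = has_bochner_integral_mult_right
  define C where "C \<omega> = Re (X \<omega>) * Re (Z \<omega>) + Im (X \<omega>) * Im (Z \<omega>)" for \<omega>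
  have XX_ZZ: "has_bochner_integral M (\<lambda>\<omega>. (cmod (X \<omega>))\<^sup>2 * (cmod (Z \<omega>))\<^sup>2) (s * t)"
    using E[of "\<lambda>z. (cmod z)\<^sup>2" "\<lambda>z. (cmod z)\<^sup>2"] moments by simp
  have XX_C: "has_bochner_integral M (\<lambda>\<omega>. (cmod (X \<omega>))\<^sup>2 * C \<omega>) 0"
    using add[OF E[of "\<lambda>z. (cmod z)\<^sup>2 * Re z" Re] E[of "\<lambda>z. (cmod z)\<^sup>2 * Im z" Im]] moments
    \<comment> \<open>discharge the side conditions before \<open>algebra_simps\<close> reorders the monomials inside them\<close>
    by (simp only: quartic_growth_monomials True_implies_equals) (simp add: C_def algebra_simps)
  have ZZ_C: "has_bochner_integral M (\<lambda>\<omega>. (cmod (Z \<omega>))\<^sup>2 * C \<omega>) 0"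
    using add[OF E[of Re "\<lambda>z. (cmod z)\<^sup>2 * Re z"] E[of Im "\<lambda>z. (cmod z)\<^sup>2 * Im z"]] moments
    by (simp only: quartic_growth_monomials True_implies_equals) (simp add: C_def algebra_simps)
  have C_C: "has_bochner_integral M (\<lambda>\<omega>. (C \<omega>)\<^sup>2) (s * t / 2)"
    using add[OF add[OF E[of "\<lambda>z. (Re z)\<^sup>2" "\<lambda>z. (Re z)\<^sup>2"]
        mult[where c=2, OF E[of "\<lambda>z. Re z * Im z" "\<lambda>z. Re z * Im z"]]]
        E[of "\<lambda>z. (Im z)\<^sup>2" "\<lambda>z. (Im z)\<^sup>2"]] moments
    by (simp only: quartic_growth_monomials True_implies_equals)
      (simp add: C_def power2_sum field_simps)
  have "(cmod (X \<omega> + Z \<omega>))\<^sup>2 = (cmod (X \<omega>))\<^sup>2 + (cmod (Z \<omega>))\<^sup>2 + 2 * C \<omega>" for \<omega>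
    by (simp add: cmod_power2 C_def power2_sum algebra_simps)
  then have "(cmod (X \<omega> + Z \<omega>))^4 = (cmod (X \<omega>))^4 + (cmod (Z \<omega>))^4
      + 2 * ((cmod (X \<omega>))\<^sup>2 * (cmod (Z \<omega>))\<^sup>2) + 4 * ((cmod (X \<omega>))\<^sup>2 * C \<omega>)
      + 4 * ((cmod (Z \<omega>))\<^sup>2 * C \<omega>) + 4 * (C \<omega>)\<^sup>2" for \<omega>
    by (simp add: power4_eq_xxxx power2_eq_square algebra_simps)
  then show ?thesis
    using add[OF add[OF add[OF add[OF add[OF EX[of "\<lambda>z. (cmod z)^4"] EZ[of "\<lambda>z. (cmod z)^4"]]
        mult[where c=2, OF XX_ZZ]] mult[where c=4, OF XX_C]] mult[where c=4, OF ZZ_C]]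
        mult[where c=4, OF C_C]] moments
    by (simp add: power2_eq_square algebra_simps)
qed

lemma circular_moments_add:
  assumes X: "circular_moments M X s" and Z: "circular_moments M Z t"
    and indep: "indep_var borel X borel Z"
  shows "circular_moments M (\<lambda>\<omega>. X \<omega> + Z \<omega>) (s + t)"
proof -
  have [measurable]: "X \<in> borel_measurable M" "Z \<in> borel_measurable M"
    using X Z by (simp_all add: circular_moments_def)
  note EX = has_bochner_integral_circular[OF X] and EZ = has_bochner_integral_circular[OF Z]
    and E = has_bochner_integral_circular_mult[OF X Z indep]
  note moments = X[unfolded circular_moments_def] Z[unfolded circular_moments_def]
  note add = has_bochner_integral_add and mult = has_bochner_integral_mult_right
  have "has_bochner_integral M (\<lambda>\<omega>. Re (X \<omega> + Z \<omega>)) 0"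
    using add[OF EX[of Re] EZ[of Re]] moments by simp
  moreover have "has_bochner_integral M (\<lambda>\<omega>. Im (X \<omega> + Z \<omega>)) 0"
    using add[OF EX[of Im] EZ[of Im]] moments by simp
  moreover have "has_bochner_integral M (\<lambda>\<omega>. (Re (X \<omega> + Z \<omega>))\<^sup>2) ((s + t) / 2)"
    using add[OF add[OF EX[of "\<lambda>z. (Re z)\<^sup>2"] mult[where c=2, OF E[of Re Re]]] EZ[of "\<lambda>z. (Re z)\<^sup>2"]]
      moments by (simp add: power2_sum field_simps)
  moreover have "has_bochner_integral M (\<lambda>\<omega>. (Im (X \<omega> + Z \<omega>))\<^sup>2) ((s + t) / 2)"
    using add[OF add[OF EX[of "\<lambda>z. (Im z)\<^sup>2"] mult[where c=2, OF E[of Im Im]]] EZ[of "\<lambda>z. (Im z)\<^sup>2"]]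
      moments by (simp add: power2_sum field_simps)
  moreover have "has_bochner_integral M (\<lambda>\<omega>. Re (X \<omega> + Z \<omega>) * Im (X \<omega> + Z \<omega>)) 0"
    using add[OF add[OF add[OF EX[of "\<lambda>z. Re z * Im z"] E[of Re Im]] E[of Im Re]] EZ[of "\<lambda>z. Re z * Im z"]]
      moments
    by (simp only: quartic_growth_monomials True_implies_equals) (simp add: algebra_simps)
  ultimately show ?thesis
    using has_bochner_integral_norm_add_power4[OF X Z indep]
    by (auto simp: circular_moments_def has_bochner_integral_iff)
qed

lemma circular_moments_scale:
  assumes "circular_moments M X s"
  shows "circular_moments M (\<lambda>\<omega>. of_real r * X \<omega>) (r\<^sup>2 * s)"
proof -
  have [measurable]: "X \<in> borel_measurable M"
    using assms by (simp add: circular_moments_def)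
  have scale: "(cmod (of_real r * X \<omega>))^4 = r^4 * (cmod (X \<omega>))^4"
    "r * Re (X \<omega>) * (r * Im (X \<omega>)) = r\<^sup>2 * (Re (X \<omega>) * Im (X \<omega>))" for \<omega>
    by (simp_all add: norm_mult power_mult_distrib power2_eq_square)
  show ?thesis
    using assms by (simp add: circular_moments_def power_mult_distrib scale)
qed

lemma integrable_quartic_growth_unit:
  assumes [measurable]: "U \<in> borel_measurable M"
    and U: "\<And>\<omega>. cmod (U \<omega>) = 1" and "quartic_growth g"
  shows "integrable M (\<lambda>\<omega>. g (U \<omega>))"
proof -
  from \<open>quartic_growth g\<close> obtain n where [measurable]: "g \<in> borel_measurable borel"
    and bound: "\<And>z. \<bar>g z\<bar> \<le> cmod z ^ n"
    unfolding quartic_growth_def by blast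
  have "\<bar>g (U \<omega>)\<bar> \<le> 1" for \<omega>
    using bound[of "U \<omega>"] by (simp add: U)
  then show ?thesis
    by (intro integrable_const_bound[where B=1]) auto
qed

lemma circular_moments_mult_unit:
  assumes X: "circular_moments M X s" and [measurable]: "U \<in> borel_measurable M"
    and U: "\<And>\<omega>. cmod (U \<omega>) = 1" and indep: "indep_var borel X borel U"
  shows "circular_moments M (\<lambda>\<omega>. X \<omega> * U \<omega>) s"
proof -
  note U_int = integrable_quartic_growth_unit[of U, OF _ U]
  have E: "has_bochner_integral M (\<lambda>\<omega>. f (X \<omega>) * g (U \<omega>)) ((\<integral>\<omega>. f (X \<omega>) \<partial>M) * (\<integral>\<omega>. g (U \<omega>) \<partial>M))"
    if "quartic_growth f" "quartic_growth g" for f g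
    using that circular_moments_integrable[OF X] U_int
    by (intro has_bochner_integral_indep_var_mult[OF indep]) (auto simp: quartic_growth_def)
  have U2: "(\<integral>\<omega>. (Im (U \<omega>))\<^sup>2 \<partial>M) = 1 - (\<integral>\<omega>. (Re (U \<omega>))\<^sup>2 \<partial>M)"
  proof -
    have "(\<integral>\<omega>. (Re (U \<omega>))\<^sup>2 \<partial>M) + (\<integral>\<omega>. (Im (U \<omega>))\<^sup>2 \<partial>M) = (\<integral>\<omega>. (cmod (U \<omega>))\<^sup>2 \<partial>M)"
      using U_int[of "\<lambda>z. (Re z)\<^sup>2"] U_int[of "\<lambda>z. (Im z)\<^sup>2"] by (simp add: cmod_power2)
    then show ?thesis
      by (simp add: U prob_space)
  qed
  note moments = X[unfolded circular_moments_def]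
  note add = has_bochner_integral_add and diff = has_bochner_integral_diff
    and mult = has_bochner_integral_mult_right
  have "has_bochner_integral M (\<lambda>\<omega>. Re (X \<omega> * U \<omega>)) 0"
    using diff[OF E[of Re Re] E[of Im Im]] moments by simp
  moreover have "has_bochner_integral M (\<lambda>\<omega>. Im (X \<omega> * U \<omega>)) 0"
    using add[OF E[of Re Im] E[of Im Re]] moments by simp
  moreover have "has_bochner_integral M (\<lambda>\<omega>. (Re (X \<omega> * U \<omega>))\<^sup>2) (s / 2)"
    using add[OF diff[OF E[of "\<lambda>z. (Re z)\<^sup>2" "\<lambda>z. (Re z)\<^sup>2"]
        mult[where c=2, OF E[of "\<lambda>z. Re z * Im z" "\<lambda>z. Re z * Im z"]]]
        E[of "\<lambda>z. (Im z)\<^sup>2" "\<lambda>z. (Im z)\<^sup>2"]] moments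
    by (simp only: quartic_growth_monomials True_implies_equals)
      (simp add: U2 power2_diff algebra_simps)
  moreover have "has_bochner_integral M (\<lambda>\<omega>. (Im (X \<omega> * U \<omega>))\<^sup>2) (s / 2)"
    using add[OF add[OF E[of "\<lambda>z. (Re z)\<^sup>2" "\<lambda>z. (Im z)\<^sup>2"]
        mult[where c=2, OF E[of "\<lambda>z. Re z * Im z" "\<lambda>z. Re z * Im z"]]]
        E[of "\<lambda>z. (Im z)\<^sup>2" "\<lambda>z. (Re z)\<^sup>2"]] moments
    by (simp only: quartic_growth_monomials True_implies_equals)
      (simp add: U2 power2_sum algebra_simps)
  moreover have "has_bochner_integral M (\<lambda>\<omega>. Re (X \<omega> * U \<omega>) * Im (X \<omega> * U \<omega>)) 0"
    using diff[OF add[OF E[of "\<lambda>z. (Re z)\<^sup>2" "\<lambda>z. Re z * Im z"] E[of "\<lambda>z. Re z * Im z" "\<lambda>z. (Re z)\<^sup>2"]]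
        add[OF E[of "\<lambda>z. Re z * Im z" "\<lambda>z. (Im z)\<^sup>2"] E[of "\<lambda>z. (Im z)\<^sup>2" "\<lambda>z. Re z * Im z"]]] moments
    by (simp only: quartic_growth_monomials True_implies_equals) (simp add: power2_eq_square algebra_simps)
  moreover have "(cmod (X \<omega> * U \<omega>))^4 = (cmod (X \<omega>))^4" for \<omega>
    by (simp add: norm_mult U)
  ultimately show ?thesis
    using moments by (auto simp: circular_moments_def has_bochner_integral_iff)
qed

lemma circular_moments_sum:
  assumes "finite J" and "indep_vars (\<lambda>_. borel) X J"
    and "\<And>i. i \<in> J \<Longrightarrow> circular_moments M (X i) (s i)"
  shows "circular_moments M (\<lambda>\<omega>. \<Sum>i\<in>J. X i \<omega>) (\<Sum>i\<in>J. s i)"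
  using assms
proof (induction J rule: finite_induct)
  case empty
  then show ?case
    by (simp add: circular_moments_def)
next
  case (insert i J)
  have "indep_var borel (X i) borel (\<lambda>\<omega>. \<Sum>j\<in>J. X j \<omega>)"
  proof -
    have "indep_var (Pi\<^sub>M {i} (\<lambda>_. borel)) (\<lambda>\<omega>. \<lambda>j\<in>{i}. X j \<omega>) (Pi\<^sub>M J (\<lambda>_. borel)) (\<lambda>\<omega>. \<lambda>j\<in>J. X j \<omega>)"
      using insert by (intro indep_var_restrict) auto
    then have "indep_var borel ((\<lambda>x. x i) \<circ> (\<lambda>\<omega>. \<lambda>j\<in>{i}. X j \<omega>)) borel
        ((\<lambda>x. \<Sum>j\<in>J. x j) \<circ> (\<lambda>\<omega>. \<lambda>j\<in>J. X j \<omega>))"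
      by (rule indep_var_compose) auto
    then show ?thesis
      by (simp add: comp_def)
  qed
  moreover have "circular_moments M (\<lambda>\<omega>. \<Sum>j\<in>J. X j \<omega>) (\<Sum>j\<in>J. s j)"
    using insert by (auto intro: indep_vars_subset)
  ultimately show ?case
    using circular_moments_add[of "X i" "s i"] insert by simp
qed

end


section \<open>Independence\<close>

context prob_space
begin

lemma integral_square_sum_indep:
  fixes W :: "'i \<Rightarrow> 'a \<Rightarrow> real"
  assumes "finite P"
    and indep: "\<And>p q. p \<in> P \<Longrightarrow> q \<in> P \<Longrightarrow> p \<noteq> q \<Longrightarrow> indep_var borel (W p) borel (W q)"
    and int: "\<And>p. p \<in> P \<Longrightarrow> integrable M (W p)"
    and int2: "\<And>p. p \<in> P \<Longrightarrow> integrable M (\<lambda>\<omega>. (W p \<omega>)\<^sup>2)"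
    and centered: "\<And>p. p \<in> P \<Longrightarrow> (\<integral>\<omega>. W p \<omega> \<partial>M) = 0"
  shows "integrable M (\<lambda>\<omega>. (\<Sum>p\<in>P. W p \<omega>)\<^sup>2)"
    and "(\<integral>\<omega>. (\<Sum>p\<in>P. W p \<omega>)\<^sup>2 \<partial>M) = (\<Sum>p\<in>P. \<integral>\<omega>. (W p \<omega>)\<^sup>2 \<partial>M)"
proof -
  have square: "(\<Sum>p\<in>P. W p \<omega>)\<^sup>2 = (\<Sum>p\<in>P. \<Sum>q\<in>P. W p \<omega> * W q \<omega>)" for \<omega>
    by (simp add: power2_eq_square sum_product)
  have cross_int: "integrable M (\<lambda>\<omega>. W p \<omega> * W q \<omega>)" if "p \<in> P" "q \<in> P" for p q
    using that int int2 indep_var_integrable[OF indep] by (cases "p = q") (auto simp: power2_eq_square)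
  have cross: "(\<integral>\<omega>. W p \<omega> * W q \<omega> \<partial>M) = (if p = q then \<integral>\<omega>. (W p \<omega>)\<^sup>2 \<partial>M else 0)"
    if "p \<in> P" "q \<in> P" for p q
    using that int centered indep_var_lebesgue_integral[OF indep]
    by (cases "p = q") (auto simp: power2_eq_square)
  show "integrable M (\<lambda>\<omega>. (\<Sum>p\<in>P. W p \<omega>)\<^sup>2)"
    unfolding square using cross_int by auto
  show "(\<integral>\<omega>. (\<Sum>p\<in>P. W p \<omega>)\<^sup>2 \<partial>M) = (\<Sum>p\<in>P. \<integral>\<omega>. (W p \<omega>)\<^sup>2 \<partial>M)"
    unfolding square using cross_int \<open>finite P\<close> by (simp add: integrable_sum cross if_distrib)
qed

text \<open>Independence is stated on rectangles because \<^const>\<open>indep_var\<close> requires both random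
  variables to take values in the same type, whereas the increments and the channel do not.\<close>

lemma distr_pair_eq_pair_measure:
  assumes X: "X \<in> measurable M S" and Y: "Y \<in> measurable M T"
    and indep: "\<And>A B. A \<in> sets S \<Longrightarrow> B \<in> sets T \<Longrightarrow>
      prob (X -` A \<inter> Y -` B \<inter> space M) = prob (X -` A \<inter> space M) * prob (Y -` B \<inter> space M)"
  shows "distr M S X \<Otimes>\<^sub>M distr M T Y = distr M (S \<Otimes>\<^sub>M T) (\<lambda>\<omega>. (X \<omega>, Y \<omega>))"
proof -
  interpret X: prob_space "distr M S X"
    using X by (rule prob_space_distr)
  interpret Y: prob_space "distr M T Y"
    using Y by (rule prob_space_distr)
  show ?thesis
  proof (rule pair_measure_eqI)
    show "sigma_finite_measure (distr M S X)" "sigma_finite_measure (distr M T Y)" ..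
  next
    fix A B assume "A \<in> sets (distr M S X)" "B \<in> sets (distr M T Y)"
    then have "A \<in> sets S" "B \<in> sets T"
      by simp_all
    moreover have "(\<lambda>\<omega>. (X \<omega>, Y \<omega>)) -` (A \<times> B) \<inter> space M = X -` A \<inter> Y -` B \<inter> space M"
      by auto
    ultimately show "emeasure (distr M S X) A * emeasure (distr M T Y) B =
        emeasure (distr M (S \<Otimes>\<^sub>M T) (\<lambda>\<omega>. (X \<omega>, Y \<omega>))) (A \<times> B)"
      using X Y indep
      by (simp add: emeasure_distr measurable_Pair emeasure_eq_measure ennreal_mult)
  qed simp
qed

lemma nn_integral_indep_freeze:
  assumes X: "X \<in> measurable M S" and Y: "Y \<in> measurable M T"
    and indep: "\<And>A B. A \<in> sets S \<Longrightarrow> B \<in> sets T \<Longrightarrow>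
      prob (X -` A \<inter> Y -` B \<inter> space M) = prob (X -` A \<inter> space M) * prob (Y -` B \<inter> space M)"
    and f: "f \<in> borel_measurable (S \<Otimes>\<^sub>M T)"
  shows "(\<integral>\<^sup>+\<omega>. f (X \<omega>, Y \<omega>) \<partial>M) = (\<integral>\<^sup>+\<omega>. (\<integral>\<^sup>+\<omega>'. f (X \<omega>, Y \<omega>') \<partial>M) \<partial>M)"
proof -
  interpret Y: prob_space "distr M T Y"
    using Y by (rule prob_space_distr)
  have f': "f \<in> borel_measurable (distr M S X \<Otimes>\<^sub>M distr M T Y)"
    using f by (simp cong: measurable_cong_sets)
  have XY: "(\<lambda>\<omega>. (X \<omega>, Y \<omega>)) \<in> measurable M (S \<Otimes>\<^sub>M T)"
    using X Y by (rule measurable_Pair)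
  have joint: "distr M S X \<Otimes>\<^sub>M distr M T Y = distr M (S \<Otimes>\<^sub>M T) (\<lambda>\<omega>. (X \<omega>, Y \<omega>))"
    using X Y indep by (rule distr_pair_eq_pair_measure)
  have "(\<integral>\<^sup>+\<omega>. f (X \<omega>, Y \<omega>) \<partial>M) = (\<integral>\<^sup>+p. f p \<partial>(distr M S X \<Otimes>\<^sub>M distr M T Y))"
    unfolding joint using XY f by (simp add: nn_integral_distr)
  also have "\<dots> = (\<integral>\<^sup>+x. (\<integral>\<^sup>+y. f (x, y) \<partial>distr M T Y) \<partial>distr M S X)"
    using Y.nn_integral_fst[OF f'] ..
  also have "\<dots> = (\<integral>\<^sup>+\<omega>. (\<integral>\<^sup>+y. f (X \<omega>, y) \<partial>distr M T Y) \<partial>M)"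
    using X Y.borel_measurable_nn_integral_fst[OF f'] by (simp add: nn_integral_distr)
  also have "\<dots> = (\<integral>\<^sup>+\<omega>. (\<integral>\<^sup>+\<omega>'. f (X \<omega>, Y \<omega>') \<partial>M) \<partial>M)"
    using X Y f by (intro nn_integral_cong) (simp add: nn_integral_distr measurable_space)
  finally show ?thesis .
qed

lemma indep_set_collect_None_Some:
  assumes indep: "indep_sets F (insert None (Some ` I))"
    and stable: "\<And>i. i \<in> insert None (Some ` I) \<Longrightarrow> Int_stable (F i)"
  shows "indep_set (sigma_sets (space M) (F None)) (sigma_sets (space M) (\<Union>i\<in>I. F (Some i)))"
proof -
  define J where "J b = (if b then {None} else Some ` I)" for b
  have "indep_sets (\<lambda>b. sigma_sets (space M) (\<Union>i\<in>J b. F i)) UNIV"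
    using indep stable
    by (intro indep_sets_collect_sigma) (auto simp: J_def disjoint_family_on_def split: if_splits)
  moreover have "(\<lambda>b. sigma_sets (space M) (\<Union>i\<in>J b. F i)) =
      case_bool (sigma_sets (space M) (F None)) (sigma_sets (space M) (\<Union>i\<in>I. F (Some i)))"
    by (auto simp: J_def fun_eq_iff split: bool.split)
  ultimately show ?thesis
    by (simp add: indep_set_def)
qed

lemma indep_sets_reindex:
  assumes "indep_sets F (f ` I)" and "inj_on f I"
  shows "indep_sets (\<lambda>i. F (f i)) I"
proof (rule indep_setsI)
  show "F (f i) \<subseteq> events" if "i \<in> I" for i
    using assms(1) that by (auto simp: indep_sets_def)
next
  fix A J assume J: "J \<noteq> {}" "J \<subseteq> I" "finite J" and A: "\<forall>j\<in>J. A j \<in> F (f j)"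
  define A' where "A' = A \<circ> the_inv_into I f"
  have "prob (\<Inter>j\<in>f ` J. A' j) = (\<Prod>j\<in>f ` J. prob (A' j))"
    using J A assms(2) by (intro indep_setsD[OF assms(1)])
      (auto simp: A'_def the_inv_into_f_f inj_on_subset)
  then show "prob (\<Inter>j\<in>J. A j) = (\<Prod>j\<in>J. prob (A j))"
    using J assms(2) by (simp add: A'_def prod.reindex inj_on_subset the_inv_into_f_f subsetD)
qed

end

lemma integral_eq_of_nn_integral_eq:
  fixes f g :: "'a \<Rightarrow> real"
  assumes "f \<in> borel_measurable M" and "integrable M g"
    and "\<And>x. 0 \<le> f x" and "\<And>x. 0 \<le> g x"
    and eq: "(\<integral>\<^sup>+x. f x \<partial>M) = (\<integral>\<^sup>+x. g x \<partial>M)"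
  shows "integrable M f" and "(\<integral>x. f x \<partial>M) = (\<integral>x. g x \<partial>M)"
proof -
  have g: "(\<integral>\<^sup>+x. g x \<partial>M) = ennreal (\<integral>x. g x \<partial>M)"
    using assms by (simp add: nn_integral_eq_integral)
  show f: "integrable M f"
    using assms g by (intro integrableI_nonneg) auto
  have "ennreal (\<integral>x. f x \<partial>M) = ennreal (\<integral>x. g x \<partial>M)"
    using assms f g by (simp add: nn_integral_eq_integral)
  then show "(\<integral>x. f x \<partial>M) = (\<integral>x. g x \<partial>M)"
    using assms by (simp add: integral_nonneg_AE)
qed

lemma Int_stable_vimage_sets: "Int_stable {f -` A \<inter> S | A. A \<in> sets N}"
proof (rule Int_stableI)
  fix a b assume "a \<in> {f -` A \<inter> S | A. A \<in> sets N}" "b \<in> {f -` A \<inter> S | A. A \<in> sets N}"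
  then obtain A B where "a = f -` A \<inter> S" "b = f -` B \<inter> S" "A \<in> sets N" "B \<in> sets N"
    by blast
  then show "a \<inter> b \<in> {f -` A \<inter> S | A. A \<in> sets N}"
    by (intro CollectI exI[of _ "A \<inter> B"]) auto
qed


section \<open>Elementary bounds and index sets\<close>

lemma sum_lessThan_times_UNIV_bool:
  "(\<Sum>p\<in>{..<n} \<times> (UNIV :: bool set). f p) = (\<Sum>m<n. f (m, True) + f (m, False))"
proof -
  have "(\<Sum>p\<in>{..<n} \<times> (UNIV :: bool set). f p) = (\<Sum>m<n. \<Sum>b\<in>UNIV. f (m, b))"
    by (simp add: sum.cartesian_product)
  then show ?thesis
    by (simp add: UNIV_bool add.commute)
qed

lemma norm_vec_power2: "(norm (x :: real^'n))\<^sup>2 = (\<Sum>j\<in>UNIV. (x $ j)\<^sup>2)"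
  by (simp add: norm_vec_def L2_set_def sum_nonneg)

lemma sum_abs_le_sqrt_card_norm: "(\<Sum>j\<in>UNIV. \<bar>(x :: real^'n) $ j\<bar>) \<le> sqrt (real CARD('n)) * norm x"
proof (rule power2_le_imp_le)
  have "(\<Sum>j\<in>UNIV. \<bar>x $ j\<bar>)\<^sup>2 \<le> (\<Sum>j\<in>UNIV. \<bar>x $ j\<bar>\<^sup>2) * real CARD('n)"
    by (rule sum_squared_le_sum_of_squares)
  then show "(\<Sum>j\<in>UNIV. \<bar>x $ j\<bar>)\<^sup>2 \<le> (sqrt (real CARD('n)) * norm x)\<^sup>2"
    by (simp add: power_mult_distrib norm_vec_power2 mult.commute)
qed simp

lemma sum_square_mean_abs_le:
  fixes \<delta> :: "nat \<Rightarrow> real^'n"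
  assumes "K \<ge> 1" and B: "\<And>k. k < K \<Longrightarrow> norm (\<delta> k) \<le> B"
  shows "(\<Sum>j\<in>UNIV. ((1 / real K) * (\<Sum>k<K. \<bar>\<delta> k $ j\<bar>))\<^sup>2) \<le> B\<^sup>2"
proof -
  have K: "real K > 0"
    using \<open>K \<ge> 1\<close> by simp
  have "((1 / real K) * (\<Sum>k<K. \<bar>\<delta> k $ j\<bar>))\<^sup>2 \<le> (1 / real K) * (\<Sum>k<K. (\<delta> k $ j)\<^sup>2)" for j
  proof -
    have "(\<Sum>k<K. \<bar>\<delta> k $ j\<bar>)\<^sup>2 \<le> (\<Sum>k<K. \<bar>\<delta> k $ j\<bar>\<^sup>2) * real K"
      using sum_squared_le_sum_of_squares[of "\<lambda>k. \<bar>\<delta> k $ j\<bar>" "{..<K}"] by simp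
    then show ?thesis
      using K by (simp add: power2_eq_square field_simps)
  qed
  then have "(\<Sum>j\<in>UNIV. ((1 / real K) * (\<Sum>k<K. \<bar>\<delta> k $ j\<bar>))\<^sup>2) \<le> (\<Sum>j\<in>UNIV. (1 / real K) * (\<Sum>k<K. (\<delta> k $ j)\<^sup>2))"
    by (rule sum_mono)
  also have "\<dots> = (1 / real K) * (\<Sum>k<K. (norm (\<delta> k))\<^sup>2)"
    by (simp add: norm_vec_power2 sum_distrib_left sum.swap[of _ UNIV])
  also have "\<dots> \<le> (1 / real K) * (\<Sum>k<K. B\<^sup>2)"
    using B by (intro mult_left_mono sum_mono power_mono) auto
  also have "\<dots> = B\<^sup>2"
    using K by simp
  finally show ?thesis .
qed

lemma sum_mean_abs_le:
  fixes \<delta> :: "nat \<Rightarrow> real^'n"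
  assumes "K \<ge> 1" and B: "\<And>k. k < K \<Longrightarrow> norm (\<delta> k) \<le> B"
  shows "(\<Sum>j\<in>UNIV. (1 / real K) * (\<Sum>k<K. \<bar>\<delta> k $ j\<bar>)) \<le> sqrt (real CARD('n)) * B"
proof -
  have "(\<Sum>j\<in>UNIV. (1 / real K) * (\<Sum>k<K. \<bar>\<delta> k $ j\<bar>)) = (1 / real K) * (\<Sum>k<K. \<Sum>j\<in>UNIV. \<bar>\<delta> k $ j\<bar>)"
    by (simp add: sum_distrib_left sum.swap[of _ UNIV])
  also have "\<dots> \<le> (1 / real K) * (\<Sum>k<K. sqrt (real CARD('n)) * B)"
    using B by (intro mult_left_mono sum_mono order_trans[OF sum_abs_le_sqrt_card_norm]) auto
  also have "\<dots> = sqrt (real CARD('n)) * B"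
    using \<open>K \<ge> 1\<close> by simp
  finally show ?thesis .
qed

lemma branch_part_nonneg: "branch_part b x \<ge> 0"
  by (auto simp: branch_part_def ppart_def npart_def)

lemma abs_branch_part_le: "\<bar>branch_part b x\<bar> \<le> \<bar>x\<bar>"
  by (auto simp: branch_part_def ppart_def npart_def)

lemma borel_measurable_branch_part [measurable]: "branch_part b \<in> borel_measurable borel"
  unfolding branch_part_def ppart_def npart_def by measurable

lemma borel_measurable_vec_nth [measurable]: "(\<lambda>x :: real^'n. x $ j) \<in> borel_measurable borel"
  by measurable

lemma borel_measurable_cis [measurable]: "cis \<in> borel_measurable borel"
  by (intro borel_measurable_continuous_onI continuous_intros)

definition term_idx :: "'d \<Rightarrow> nat \<Rightarrow> bool \<Rightarrow> nat option \<Rightarrow> 'd noise_idx set" where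
  "term_idx j m b x = (case x of None \<Rightarrow> {Zidx j m b} | Some k \<Rightarrow> {Hidx k j m b, Phidx k j m b})"

definition chip_idx :: "nat \<Rightarrow> 'd \<Rightarrow> nat \<Rightarrow> bool \<Rightarrow> 'd noise_idx set" where
  "chip_idx K j m b = {Zidx j m b} \<union> {Hidx k j m b | k. k < K} \<union> {Phidx k j m b | k. k < K}"

lemma mem_noise_idx_set [simp]:
  "Hidx k j m b \<in> noise_idx_set K M \<longleftrightarrow> k < K \<and> m < M"
  "Zidx j m b \<in> noise_idx_set K M \<longleftrightarrow> m < M"
  "Phidx k j m b \<in> noise_idx_set K M \<longleftrightarrow> k < K \<and> m < M"
  by (auto simp: noise_idx_set_def)

section \<open>The REED channel with frozen increments\<close>

text \<open>\<open>\<G>\<close> stands for the \<open>\<sigma>\<close>-field generated by \<open>F\<^sub>t\<close> and the increments: only the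
  \<open>\<G>\<close>-measurability of the increments and the independence of the channel from \<open>\<G>\<close> are used.
  The phases need not be uniform; only their measurability matters.\<close>

locale reed_channel = prob_space M
  for M :: "'a measure" +
  fixes \<G> :: "'a measure"
    and K Mc :: nat and \<eta> \<sigma>z2 :: real
    and \<mu> c :: "nat \<Rightarrow> real"
    and \<Delta> :: "nat \<Rightarrow> 'a \<Rightarrow> real^'d"
    and h :: "nat \<Rightarrow> 'd \<Rightarrow> nat \<Rightarrow> bool \<Rightarrow> 'a \<Rightarrow> complex"
    and z :: "'d \<Rightarrow> nat \<Rightarrow> bool \<Rightarrow> 'a \<Rightarrow> complex"
    and \<phi> :: "nat \<Rightarrow> 'd \<Rightarrow> nat \<Rightarrow> bool \<Rightarrow> 'a \<Rightarrow> real"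
  assumes subalgebra: "subalgebra M \<G>"
    and eta: "\<eta> > 0"
    and noise_var: "\<sigma>z2 > 0"
    and mu: "\<And>k. k < K \<Longrightarrow> \<mu> k > 0"
    and c_nonneg: "\<And>m. m < Mc \<Longrightarrow> c m \<ge> 0"
    and C_pos: "(\<Sum>m<Mc. c m) > 0"
    and \<Delta>_measurable: "\<And>k. k < K \<Longrightarrow> \<Delta> k \<in> borel_measurable \<G>"
    and \<Delta>_integrable: "\<And>k. k < K \<Longrightarrow> integrable M (\<Delta> k)"
    and h_CN: "\<And>k j m b. k < K \<Longrightarrow> m < Mc \<Longrightarrow> is_CN M ((\<mu> k)\<^sup>2) (h k j m b)"
    and z_CN: "\<And>j m b. m < Mc \<Longrightarrow> is_CN M \<sigma>z2 (z j m b)"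
    and \<phi>_measurable: "\<And>k j m b. k < K \<Longrightarrow> m < Mc \<Longrightarrow> \<phi> k j m b \<in> borel_measurable M"
    and indep_channel: "indep_sets
                  (\<lambda>i. case i of
                         None \<Rightarrow> sets \<G>
                       | Some n \<Rightarrow> {noise_family h z \<phi> n -` A \<inter> space M | A. A \<in> sets borel})
                  (insert None (Some ` noise_idx_set K Mc))"
begin

abbreviation "I \<equiv> noise_idx_set K Mc :: 'd noise_idx set"
abbreviation "noise_space \<equiv> Pi\<^sub>M I (\<lambda>_. borel :: complex measure)"
abbreviation "incr_space \<equiv> Pi\<^sub>M {..<K} (\<lambda>_. borel :: (real^'d) measure)"
abbreviation "C \<equiv> \<Sum>m<Mc. c m"

definition reed_error :: "'a \<Rightarrow> real^'d" where
  "reed_error \<omega> = reed_est \<eta> Mc c \<mu> K \<Delta> h z \<phi> \<omega> - ideal_agg K \<Delta> \<omega>"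

definition noise_vec :: "'a \<Rightarrow> 'd noise_idx \<Rightarrow> complex" where
  "noise_vec \<omega> = restrict (\<lambda>i. noise_family h z \<phi> i \<omega>) I"

definition incr_vec :: "'a \<Rightarrow> nat \<Rightarrow> real^'d" where
  "incr_vec \<omega> = restrict (\<lambda>k. \<Delta> k \<omega>) {..<K}"

text \<open>\<open>rx \<delta> j m b n\<close> is the received signal \<open>y\<^sub>j\<^sub>,\<^sub>m\<^sub>,\<^sub>b\<close> for increments \<open>\<delta>\<close> and channel
  realisation \<open>n\<close>; the phases are read off as real parts, matching \<^const>\<open>noise_family\<close>.\<close>

definition rx :: "(nat \<Rightarrow> real^'d) \<Rightarrow> 'd \<Rightarrow> nat \<Rightarrow> bool \<Rightarrow> ('d noise_idx \<Rightarrow> complex) \<Rightarrow> complex" where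
  "rx \<delta> j m b n = (\<Sum>k<K. n (Hidx k j m b) *
      (of_real (sqrt (\<eta> * c m * branch_part b ((1 / real K) * (\<delta> k $ j))) / \<mu> k) * cis (Re (n (Phidx k j m b)))))
    + n (Zidx j m b)"

text \<open>The \<open>K + 1\<close> independent summands of \<^const>\<open>rx\<close>: \<open>None\<close> is the receiver noise,
  \<open>Some k\<close> the faded symbol of client \<open>k\<close>.\<close>

definition rx_term :: "(nat \<Rightarrow> real^'d) \<Rightarrow> 'd \<Rightarrow> nat \<Rightarrow> bool \<Rightarrow> nat option \<Rightarrow> ('d noise_idx \<Rightarrow> complex) \<Rightarrow> complex" where
  "rx_term \<delta> j m b x n = (case x of
      None \<Rightarrow> n (Zidx j m b)
    | Some k \<Rightarrow> n (Hidx k j m b) *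
        (of_real (sqrt (\<eta> * c m * branch_part b ((1 / real K) * (\<delta> k $ j))) / \<mu> k) * cis (Re (n (Phidx k j m b)))))"

definition rx_var :: "(nat \<Rightarrow> real^'d) \<Rightarrow> 'd \<Rightarrow> nat \<Rightarrow> bool \<Rightarrow> real" where
  "rx_var \<delta> j m b = (\<Sum>k<K. \<eta> * c m * branch_part b ((1 / real K) * (\<delta> k $ j))) + \<sigma>z2"

definition err :: "(nat \<Rightarrow> real^'d) \<Rightarrow> 'd \<Rightarrow> ('d noise_idx \<Rightarrow> complex) \<Rightarrow> real" where
  "err \<delta> j n = (1 / (\<eta> * C)) * (\<Sum>m<Mc. (cmod (rx \<delta> j m True n))\<^sup>2 - (cmod (rx \<delta> j m False n))\<^sup>2)
     - (1 / real K) * (\<Sum>k<K. \<delta> k $ j)"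

lemma noise_family_measurable: "i \<in> I \<Longrightarrow> noise_family h z \<phi> i \<in> borel_measurable M"
  using h_CN z_CN \<phi>_measurable
  by (auto simp: noise_idx_set_def is_CN_def distributed_def)

lemma indep_noise_family: "indep_vars (\<lambda>_. borel) (noise_family h z \<phi>) I"
proof -
  have "indep_sets (\<lambda>i. case i of None \<Rightarrow> sets \<G>
      | Some n \<Rightarrow> {noise_family h z \<phi> n -` A \<inter> space M | A. A \<in> sets borel}) (Some ` I)"
    by (rule indep_sets_mono_index[OF _ indep_channel]) auto
  then have "indep_sets (\<lambda>n. {noise_family h z \<phi> n -` A \<inter> space M | A. A \<in> sets borel}) I"
    by (auto dest: indep_sets_reindex)
  then show ?thesis
    unfolding indep_vars_def2 using noise_family_measurable by auto
qed

lemma noise_vec_measurable: "noise_vec \<in> measurable M noise_space"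
  unfolding noise_vec_def by (intro measurable_restrict noise_family_measurable)

lemma incr_vec_measurable: "incr_vec \<in> measurable \<G> incr_space"
  unfolding incr_vec_def by (intro measurable_restrict \<Delta>_measurable) simp

lemma noise_vec_apply:
  "k < K \<Longrightarrow> m < Mc \<Longrightarrow> noise_vec \<omega> (Hidx k j m b) = h k j m b \<omega>"
  "m < Mc \<Longrightarrow> noise_vec \<omega> (Zidx j m b) = z j m b \<omega>"
  "k < K \<Longrightarrow> m < Mc \<Longrightarrow> noise_vec \<omega> (Phidx k j m b) = of_real (\<phi> k j m b \<omega>)"
  by (simp_all add: noise_vec_def)

lemma indep_set_sets_noise:
  "indep_set (sets \<G>)
    (sigma_sets (space M) (\<Union>n\<in>I. {noise_family h z \<phi> n -` A \<inter> space M | A. A \<in> sets (borel :: complex measure)}))"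
proof -
  have "indep_set (sigma_sets (space M) (sets \<G>))
    (sigma_sets (space M) (\<Union>n\<in>I. {noise_family h z \<phi> n -` A \<inter> space M | A. A \<in> sets (borel :: complex measure)}))"
    using indep_set_collect_None_Some[OF indep_channel]
    by (auto simp: Int_stable_vimage_sets sets.Int_stable split: option.split)
  then show ?thesis
    using sets.sigma_sets_eq[of \<G>] subalgebra by (simp add: subalgebra_def)
qed

lemma prob_indep_noise_vec:
  assumes V: "V \<in> measurable \<G> S" and A: "A \<in> sets S" and B: "B \<in> sets noise_space"
  shows "prob (V -` A \<inter> noise_vec -` B \<inter> space M) = prob (V -` A \<inter> space M) * prob (noise_vec -` B \<inter> space M)"
proof -
  let ?N = "\<Union>n\<in>I. {noise_family h z \<phi> n -` A \<inter> space M | A. A \<in> sets (borel :: complex measure)}"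
  have "space \<G> = space M"
    using subalgebra by (simp add: subalgebra_def)
  then have a: "V -` A \<inter> space M \<in> sets \<G>"
    using measurable_sets[OF V A] by simp
  have b: "noise_vec -` B \<inter> space M \<in> sigma_sets (space M) ?N"
  proof -
    have N: "?N \<subseteq> Pow (space M)"
      by auto
    have "noise_vec \<in> measurable (sigma (space M) ?N) noise_space"
      unfolding noise_vec_def
    proof (rule measurable_restrict)
      fix i assume "i \<in> I"
      then show "noise_family h z \<phi> i \<in> borel_measurable (sigma (space M) ?N)"
        by (intro measurableI) (auto simp: space_measure_of_conv sets_measure_of_conv N)
    qed
    from measurable_sets[OF this B] show ?thesis
      using N by (simp add: space_measure_of_conv sets_measure_of_conv)
  qed
  have "V -` A \<inter> noise_vec -` B \<inter> space M = (V -` A \<inter> space M) \<inter> (noise_vec -` B \<inter> space M)"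
    by auto
  then show ?thesis
    using indep_setD[OF indep_set_sets_noise a b] by simp
qed

lemma nn_integral_freeze_noise:
  assumes V: "V \<in> measurable \<G> S" and f: "f \<in> borel_measurable (S \<Otimes>\<^sub>M noise_space)"
  shows "(\<integral>\<^sup>+\<omega>. f (V \<omega>, noise_vec \<omega>) \<partial>M) = (\<integral>\<^sup>+\<omega>. (\<integral>\<^sup>+\<omega>'. f (V \<omega>, noise_vec \<omega>') \<partial>M) \<partial>M)"
  by (rule nn_integral_indep_freeze[OF measurable_from_subalg[OF subalgebra V] noise_vec_measurable
        prob_indep_noise_vec[OF V] f])

lemma indep_vars_noise_groups:
  assumes "\<And>x. x \<in> L \<Longrightarrow> G x \<subseteq> I" and "disjoint_family_on G L"
    and "\<And>x. x \<in> L \<Longrightarrow> f x \<in> borel_measurable (Pi\<^sub>M (G x) (\<lambda>_. borel))"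
  shows "indep_vars (\<lambda>_. borel) (\<lambda>x \<omega>. f x (restrict (noise_vec \<omega>) (G x))) L"
proof -
  have "indep_vars (\<lambda>_. borel) (\<lambda>x \<omega>. f x (restrict (\<lambda>i. noise_family h z \<phi> i \<omega>) (G x))) L"
    using assms by (intro indep_vars_compose2[OF indep_vars_restrict[OF indep_noise_family]])
  moreover have "restrict (noise_vec \<omega>) (G x) = restrict (\<lambda>i. noise_family h z \<phi> i \<omega>) (G x)"
    if "x \<in> L" for x \<omega>
    using assms(1)[OF that] by (auto simp: noise_vec_def fun_eq_iff)
  ultimately show ?thesis
    by (simp cong: indep_vars_cong)
qed

lemma indep_var_noise_groups:
  assumes "A \<inter> B = {}" "A \<subseteq> I" "B \<subseteq> I"
    and "f \<in> borel_measurable (Pi\<^sub>M A (\<lambda>_. borel))" "g \<in> borel_measurable (Pi\<^sub>M B (\<lambda>_. borel))"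
  shows "indep_var borel (\<lambda>\<omega>. f (restrict (noise_vec \<omega>) A)) borel (\<lambda>\<omega>. g (restrict (noise_vec \<omega>) B))"
proof -
  have "indep_var borel (f \<circ> (\<lambda>\<omega>. restrict (\<lambda>i. noise_family h z \<phi> i \<omega>) A))
      borel (g \<circ> (\<lambda>\<omega>. restrict (\<lambda>i. noise_family h z \<phi> i \<omega>) B))"
    using assms by (intro indep_var_compose[OF indep_var_restrict[OF indep_noise_family]])
  moreover have "restrict (noise_vec \<omega>) A = restrict (\<lambda>i. noise_family h z \<phi> i \<omega>) A"
    "restrict (noise_vec \<omega>) B = restrict (\<lambda>i. noise_family h z \<phi> i \<omega>) B" for \<omega>
    using assms(2,3) by (auto simp: noise_vec_def fun_eq_iff)
  ultimately show ?thesis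
    by (simp add: comp_def)
qed

lemma measurable_rx:
  assumes dv: "\<And>k. k < K \<Longrightarrow> (\<lambda>p. dv p k) \<in> borel_measurable N"
    and nv: "\<And>i. i \<in> chip_idx K j m b \<Longrightarrow> (\<lambda>p. nv p i) \<in> borel_measurable N"
  shows "(\<lambda>p. rx (dv p) j m b (nv p)) \<in> borel_measurable N"
proof -
  have "(\<lambda>p. nv p (Hidx k j m b) * (of_real (sqrt (\<eta> * c m * branch_part b ((1 / real K) * (dv p k $ j))) / \<mu> k)
      * cis (Re (nv p (Phidx k j m b))))) \<in> borel_measurable N" if "k < K" for k
  proof -
    have [measurable]: "(\<lambda>p. nv p (Hidx k j m b)) \<in> borel_measurable N"
      "(\<lambda>p. nv p (Phidx k j m b)) \<in> borel_measurable N" "(\<lambda>p. dv p k) \<in> borel_measurable N"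
      using that by (auto simp: chip_idx_def intro!: nv dv)
    show ?thesis
      by measurable
  qed
  moreover have "(\<lambda>p. nv p (Zidx j m b)) \<in> borel_measurable N"
    by (auto simp: chip_idx_def intro!: nv)
  ultimately show ?thesis
    unfolding rx_def by (intro borel_measurable_add borel_measurable_sum) auto
qed

lemma rx_restrict_chip_idx: "rx \<delta> j m b (restrict n (chip_idx K j m b)) = rx \<delta> j m b n"
  by (simp add: rx_def chip_idx_def)

lemma circular_moments_faded_symbol:
  assumes k: "k < K" and m: "m < Mc"
  shows "circular_moments M (\<lambda>\<omega>. h k j m b \<omega> * (of_real r * cis (\<phi> k j m b \<omega>))) (r\<^sup>2 * (\<mu> k)\<^sup>2)"
proof -
  have "indep_var borel (\<lambda>\<omega>. (\<lambda>n. n (Hidx k j m b)) (restrict (noise_vec \<omega>) {Hidx k j m b}))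
      borel (\<lambda>\<omega>. (\<lambda>n. cis (Re (n (Phidx k j m b)))) (restrict (noise_vec \<omega>) {Phidx k j m b}))"
    using k m by (intro indep_var_noise_groups) auto
  then have "indep_var borel (h k j m b) borel (\<lambda>\<omega>. cis (\<phi> k j m b \<omega>))"
    using k m by (simp add: noise_vec_apply)
  then have "circular_moments M (\<lambda>\<omega>. h k j m b \<omega> * cis (\<phi> k j m b \<omega>)) ((\<mu> k)\<^sup>2)"
    using is_CN_circular_moments[OF h_CN[OF k m]] mu[OF k] \<phi>_measurable[OF k m]
    by (intro circular_moments_mult_unit) auto
  from circular_moments_scale[OF this, of r] show ?thesis
    by (simp add: mult_ac)
qed

lemma rx_eq_sum_rx_term: "rx \<delta> j m b n = (\<Sum>x\<in>insert None (Some ` {..<K}). rx_term \<delta> j m b x n)"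
  by (simp add: rx_def rx_term_def sum.reindex add.commute)

lemma rx_term_restrict_term_idx: "rx_term \<delta> j m b x (restrict n (term_idx j m b x)) = rx_term \<delta> j m b x n"
  by (cases x) (simp_all add: rx_term_def term_idx_def)

lemma indep_vars_rx_term:
  assumes "m < Mc"
  shows "indep_vars (\<lambda>_. borel) (\<lambda>x \<omega>. rx_term \<delta> j m b x (noise_vec \<omega>)) (insert None (Some ` {..<K}))"
proof -
  have "indep_vars (\<lambda>_. borel) (\<lambda>x \<omega>. rx_term \<delta> j m b x (restrict (noise_vec \<omega>) (term_idx j m b x)))
      (insert None (Some ` {..<K}))"
  proof (rule indep_vars_noise_groups)
    show "term_idx j m b x \<subseteq> I" if "x \<in> insert None (Some ` {..<K})" for x
      using that assms by (auto simp: term_idx_def)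
    show "disjoint_family_on (term_idx j m b) (insert None (Some ` {..<K}))"
      by (auto simp: disjoint_family_on_def term_idx_def)
    show "rx_term \<delta> j m b x \<in> borel_measurable (Pi\<^sub>M (term_idx j m b x) (\<lambda>_. borel))" for x
    proof -
      have [measurable]: "(\<lambda>n. n i) \<in> borel_measurable (Pi\<^sub>M (term_idx j m b x) (\<lambda>_. borel :: complex measure))"
        if "i \<in> term_idx j m b x" for i
        using that by (rule measurable_component_singleton)
      show ?thesis
        unfolding rx_term_def[abs_def] by (cases x) (simp_all add: term_idx_def)
    qed
  qed
  then show ?thesis
    by (simp only: rx_term_restrict_term_idx)
qed

lemma circular_moments_rx_term:
  assumes m: "m < Mc" and x: "x \<in> insert None (Some ` {..<K})"
  shows "circular_moments M (\<lambda>\<omega>. rx_term \<delta> j m b x (noise_vec \<omega>))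
    (case x of None \<Rightarrow> \<sigma>z2 | Some k \<Rightarrow> \<eta> * c m * branch_part b ((1 / real K) * (\<delta> k $ j)))"
proof (cases x)
  case None
  then show ?thesis
    using is_CN_circular_moments[OF z_CN[OF m] noise_var] m
    by (simp add: rx_term_def noise_vec_apply)
next
  case (Some k)
  with x have k: "k < K"
    by auto
  define r where "r = sqrt (\<eta> * c m * branch_part b ((1 / real K) * (\<delta> k $ j))) / \<mu> k"
  have "r\<^sup>2 * (\<mu> k)\<^sup>2 = \<eta> * c m * branch_part b ((1 / real K) * (\<delta> k $ j))"
    using mu[OF k] eta c_nonneg[OF m] branch_part_nonneg by (simp add: r_def power_divide)
  then show ?thesis
    using circular_moments_faded_symbol[OF k m, of j b r] k m
    by (simp add: Some rx_term_def r_def noise_vec_apply)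
qed

lemma circular_moments_rx:
  assumes "m < Mc"
  shows "circular_moments M (\<lambda>\<omega>. rx \<delta> j m b (noise_vec \<omega>)) (rx_var \<delta> j m b)"
proof -
  have "circular_moments M (\<lambda>\<omega>. \<Sum>x\<in>insert None (Some ` {..<K}). rx_term \<delta> j m b x (noise_vec \<omega>))
      (\<Sum>x\<in>insert None (Some ` {..<K}).
        case x of None \<Rightarrow> \<sigma>z2 | Some k \<Rightarrow> \<eta> * c m * branch_part b ((1 / real K) * (\<delta> k $ j)))"
    using assms by (intro circular_moments_sum indep_vars_rx_term circular_moments_rx_term) auto
  then show ?thesis
    by (simp add: rx_eq_sum_rx_term rx_var_def sum.reindex add.commute)
qed

lemma rx_var_diff:
  "(\<Sum>m<Mc. rx_var \<delta> j m True - rx_var \<delta> j m False) = \<eta> * C * ((1 / real K) * (\<Sum>k<K. \<delta> k $ j))"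
proof -
  have "branch_part True x - branch_part False x = x" for x
    by (simp add: branch_part_def ppart_def npart_def max_def)
  then have "rx_var \<delta> j m True - rx_var \<delta> j m False = c m * (\<eta> * ((1 / real K) * (\<Sum>k<K. \<delta> k $ j)))" for m
    by (simp add: rx_var_def sum_distrib_left algebra_simps flip: sum_subtractf)
  then have "(\<Sum>m<Mc. rx_var \<delta> j m True - rx_var \<delta> j m False) = C * (\<eta> * ((1 / real K) * (\<Sum>k<K. \<delta> k $ j)))"
    by (simp add: sum_distrib_right sum_divide_distrib)
  then show ?thesis
    by (simp add: mult_ac)
qed


definition chip_dev :: "(nat \<Rightarrow> real^'d) \<Rightarrow> 'd \<Rightarrow> nat \<times> bool \<Rightarrow> ('d noise_idx \<Rightarrow> complex) \<Rightarrow> real" where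
  "chip_dev \<delta> j p n = (if snd p then 1 else -1) *
      ((cmod (rx \<delta> j (fst p) (snd p) n))\<^sup>2 - rx_var \<delta> j (fst p) (snd p))"

lemma err_eq_sum_chip_dev: "err \<delta> j n = (1 / (\<eta> * C)) * (\<Sum>p\<in>{..<Mc} \<times> UNIV. chip_dev \<delta> j p n)"
proof -
  have "(\<Sum>p\<in>{..<Mc} \<times> UNIV. chip_dev \<delta> j p n) =
      (\<Sum>m<Mc. (cmod (rx \<delta> j m True n))\<^sup>2 - (cmod (rx \<delta> j m False n))\<^sup>2)
        - (\<Sum>m<Mc. rx_var \<delta> j m True - rx_var \<delta> j m False)"
    by (simp add: sum_lessThan_times_UNIV_bool chip_dev_def algebra_simps flip: sum_subtractf)
  then show ?thesis
    using eta C_pos by (simp add: err_def rx_var_diff field_simps)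
qed

lemma chip_dev_moments:
  assumes "p \<in> {..<Mc} \<times> UNIV"
  shows "integrable M (\<lambda>\<omega>. chip_dev \<delta> j p (noise_vec \<omega>))"
    and "(\<integral>\<omega>. chip_dev \<delta> j p (noise_vec \<omega>) \<partial>M) = 0"
    and "integrable M (\<lambda>\<omega>. (chip_dev \<delta> j p (noise_vec \<omega>))\<^sup>2)"
    and "(\<integral>\<omega>. (chip_dev \<delta> j p (noise_vec \<omega>))\<^sup>2 \<partial>M) = (rx_var \<delta> j (fst p) (snd p))\<^sup>2"
proof -
  let ?v = "rx_var \<delta> j (fst p) (snd p)"
  note Y = circular_moments_norm[OF circular_moments_rx, of "fst p" \<delta> j "snd p"]
  have "(chip_dev \<delta> j p n)\<^sup>2 =
      (cmod (rx \<delta> j (fst p) (snd p) n))^4 - 2 * ?v * (cmod (rx \<delta> j (fst p) (snd p) n))\<^sup>2 + ?v\<^sup>2" for n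
    by (simp add: chip_dev_def power2_eq_square power4_eq_xxxx algebra_simps)
  then show "integrable M (\<lambda>\<omega>. chip_dev \<delta> j p (noise_vec \<omega>))"
    and "(\<integral>\<omega>. chip_dev \<delta> j p (noise_vec \<omega>) \<partial>M) = 0"
    and "integrable M (\<lambda>\<omega>. (chip_dev \<delta> j p (noise_vec \<omega>))\<^sup>2)"
    and "(\<integral>\<omega>. (chip_dev \<delta> j p (noise_vec \<omega>))\<^sup>2 \<partial>M) = ?v\<^sup>2"
    using Y assms by (auto simp: chip_dev_def prob_space power2_eq_square)
qed

lemma indep_var_chip_dev:
  assumes "p \<in> {..<Mc} \<times> UNIV" and "q \<in> {..<Mc} \<times> UNIV" and "p \<noteq> q"
  shows "indep_var borel (\<lambda>\<omega>. chip_dev \<delta> j p (noise_vec \<omega>)) borel (\<lambda>\<omega>. chip_dev \<delta> j q (noise_vec \<omega>))"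
proof -
  have measurable: "chip_dev \<delta> j p \<in> borel_measurable (Pi\<^sub>M (chip_idx K j (fst p) (snd p)) (\<lambda>_. borel))" for p
    unfolding chip_dev_def
    using measurable_rx[where dv="\<lambda>_. \<delta>" and nv="\<lambda>n. n" and N="Pi\<^sub>M (chip_idx K j (fst p) (snd p)) (\<lambda>_. borel)"]
    by measurable
  have "indep_var borel (\<lambda>\<omega>. chip_dev \<delta> j p (restrict (noise_vec \<omega>) (chip_idx K j (fst p) (snd p))))
      borel (\<lambda>\<omega>. chip_dev \<delta> j q (restrict (noise_vec \<omega>) (chip_idx K j (fst q) (snd q))))"
    using assms by (intro indep_var_noise_groups measurable) (auto simp: chip_idx_def prod_eq_iff)
  then show ?thesis
    by (simp add: chip_dev_def rx_restrict_chip_idx)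
qed

lemma integral_err_square:
  shows "integrable M (\<lambda>\<omega>. (err \<delta> j (noise_vec \<omega>))\<^sup>2)"
    and "(\<integral>\<omega>. (err \<delta> j (noise_vec \<omega>))\<^sup>2 \<partial>M) =
      (1 / (\<eta> * C))\<^sup>2 * (\<Sum>m<Mc. (rx_var \<delta> j m True)\<^sup>2 + (rx_var \<delta> j m False)\<^sup>2)"
proof -
  let ?P = "{..<Mc} \<times> (UNIV :: bool set)"
  have "integrable M (\<lambda>\<omega>. (\<Sum>p\<in>?P. chip_dev \<delta> j p (noise_vec \<omega>))\<^sup>2)"
    and "(\<integral>\<omega>. (\<Sum>p\<in>?P. chip_dev \<delta> j p (noise_vec \<omega>))\<^sup>2 \<partial>M) = (\<Sum>p\<in>?P. (rx_var \<delta> j (fst p) (snd p))\<^sup>2)"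
    using integral_square_sum_indep[of ?P "\<lambda>p \<omega>. chip_dev \<delta> j p (noise_vec \<omega>)",
        OF _ indep_var_chip_dev chip_dev_moments(1,3,2)] chip_dev_moments(4)
    by auto
  moreover have "(err \<delta> j n)\<^sup>2 = (1 / (\<eta> * C))\<^sup>2 * (\<Sum>p\<in>?P. chip_dev \<delta> j p n)\<^sup>2" for n
    by (simp only: err_eq_sum_chip_dev power_mult_distrib)
  ultimately show "integrable M (\<lambda>\<omega>. (err \<delta> j (noise_vec \<omega>))\<^sup>2)"
    and "(\<integral>\<omega>. (err \<delta> j (noise_vec \<omega>))\<^sup>2 \<partial>M) =
      (1 / (\<eta> * C))\<^sup>2 * (\<Sum>m<Mc. (rx_var \<delta> j m True)\<^sup>2 + (rx_var \<delta> j m False)\<^sup>2)"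
    by (simp_all add: sum_lessThan_times_UNIV_bool)
qed

lemma rx_var_square_le:
  fixes \<delta> :: "nat \<Rightarrow> real^'d" and j :: 'd
  assumes m: "m < Mc"
  defines "a \<equiv> (1 / real K) * (\<Sum>k<K. \<bar>\<delta> k $ j\<bar>)"
  shows "(rx_var \<delta> j m True)\<^sup>2 + (rx_var \<delta> j m False)\<^sup>2
    \<le> \<eta>\<^sup>2 * (c m)\<^sup>2 * a\<^sup>2 + 2 * \<eta> * c m * \<sigma>z2 * a + 2 * \<sigma>z2\<^sup>2"
proof -
  define S where "S b = (\<Sum>k<K. branch_part b ((1 / real K) * (\<delta> k $ j)))" for b
  have "branch_part True x + branch_part False x = \<bar>x\<bar>" and "branch_part b x \<ge> 0" for b x
    by (auto simp: branch_part_def ppart_def npart_def)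
  then have S: "S True \<ge> 0" "S False \<ge> 0" "S True + S False = a"
    unfolding S_def a_def by (simp_all add: sum_nonneg abs_mult sum_distrib_left flip: sum.distrib)
  have "(rx_var \<delta> j m True)\<^sup>2 + (rx_var \<delta> j m False)\<^sup>2
      = \<eta>\<^sup>2 * (c m)\<^sup>2 * ((S True)\<^sup>2 + (S False)\<^sup>2) + 2 * \<eta> * c m * \<sigma>z2 * (S True + S False) + 2 * \<sigma>z2\<^sup>2"
    by (simp add: rx_var_def S_def sum_distrib_left power2_eq_square algebra_simps)
  also have "\<dots> \<le> \<eta>\<^sup>2 * (c m)\<^sup>2 * (S True + S False)\<^sup>2 + 2 * \<eta> * c m * \<sigma>z2 * (S True + S False) + 2 * \<sigma>z2\<^sup>2"
  proof -
    have "(S True)\<^sup>2 + (S False)\<^sup>2 \<le> (S True + S False)\<^sup>2"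
      using S(1,2) by (simp add: power2_eq_square algebra_simps)
    then show ?thesis
      by (intro add_right_mono mult_left_mono) auto
  qed
  finally show ?thesis
    unfolding S(3) .
qed

lemma sum_rx_var_square_le:
  assumes "K \<ge> 1" and B: "\<And>k. k < K \<Longrightarrow> norm (\<delta> k) \<le> B"
  shows "(\<Sum>j\<in>UNIV. (1 / (\<eta> * C))\<^sup>2 * (\<Sum>m<Mc. (rx_var \<delta> j m True)\<^sup>2 + (rx_var \<delta> j m False)\<^sup>2))
    \<le> (\<Sum>m<Mc. (c m)\<^sup>2) / C\<^sup>2 * B\<^sup>2 + 2 * \<sigma>z2 * sqrt (real CARD('d)) / (\<eta> * C) * B
      + 2 * real CARD('d) * real Mc * \<sigma>z2\<^sup>2 / (\<eta>\<^sup>2 * C\<^sup>2)"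
proof -
  define a where "a j = (1 / real K) * (\<Sum>k<K. \<bar>\<delta> k $ j\<bar>)" for j
  have C: "\<eta> * C > 0"
    using eta C_pos by simp
  have "(1 / (\<eta> * C))\<^sup>2 * (\<Sum>m<Mc. (rx_var \<delta> j m True)\<^sup>2 + (rx_var \<delta> j m False)\<^sup>2)
      \<le> (\<Sum>m<Mc. (c m)\<^sup>2) / C\<^sup>2 * (a j)\<^sup>2 + 2 * \<sigma>z2 / (\<eta> * C) * a j
        + 2 * real Mc * \<sigma>z2\<^sup>2 / (\<eta>\<^sup>2 * C\<^sup>2)" for j
  proof -
    have "(1 / (\<eta> * C))\<^sup>2 * (\<Sum>m<Mc. (rx_var \<delta> j m True)\<^sup>2 + (rx_var \<delta> j m False)\<^sup>2)
        \<le> (1 / (\<eta> * C))\<^sup>2 * (\<Sum>m<Mc. \<eta>\<^sup>2 * (c m)\<^sup>2 * (a j)\<^sup>2 + 2 * \<eta> * c m * \<sigma>z2 * a j + 2 * \<sigma>z2\<^sup>2)"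
      unfolding a_def by (intro mult_left_mono sum_mono rx_var_square_le) auto
    also have "\<dots> = (1 / (\<eta> * C))\<^sup>2 * (\<eta>\<^sup>2 * (a j)\<^sup>2 * (\<Sum>m<Mc. (c m)\<^sup>2) + 2 * \<eta> * \<sigma>z2 * a j * C
        + 2 * real Mc * \<sigma>z2\<^sup>2)"
      by (simp add: sum.distrib sum_distrib_left sum_distrib_right mult_ac)
    also have "\<dots> = (\<Sum>m<Mc. (c m)\<^sup>2) / C\<^sup>2 * (a j)\<^sup>2 + 2 * \<sigma>z2 / (\<eta> * C) * a j
        + 2 * real Mc * \<sigma>z2\<^sup>2 / (\<eta>\<^sup>2 * C\<^sup>2)"
      using eta C_pos by (simp add: power2_eq_square field_simps)
    finally show ?thesis .
  qed
  then have "(\<Sum>j\<in>UNIV. (1 / (\<eta> * C))\<^sup>2 * (\<Sum>m<Mc. (rx_var \<delta> j m True)\<^sup>2 + (rx_var \<delta> j m False)\<^sup>2))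
      \<le> (\<Sum>j\<in>UNIV. (\<Sum>m<Mc. (c m)\<^sup>2) / C\<^sup>2 * (a j)\<^sup>2 + 2 * \<sigma>z2 / (\<eta> * C) * a j
        + 2 * real Mc * \<sigma>z2\<^sup>2 / (\<eta>\<^sup>2 * C\<^sup>2))"
    by (rule sum_mono)
  also have "\<dots> = (\<Sum>m<Mc. (c m)\<^sup>2) / C\<^sup>2 * (\<Sum>j\<in>UNIV. (a j)\<^sup>2) + 2 * \<sigma>z2 / (\<eta> * C) * (\<Sum>j\<in>UNIV. a j)
        + real CARD('d) * (2 * real Mc * \<sigma>z2\<^sup>2 / (\<eta>\<^sup>2 * C\<^sup>2))"
    by (simp add: sum.distrib sum_distrib_left)
  also have "\<dots> \<le> (\<Sum>m<Mc. (c m)\<^sup>2) / C\<^sup>2 * B\<^sup>2 + 2 * \<sigma>z2 / (\<eta> * C) * (sqrt (real CARD('d)) * B)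
      + real CARD('d) * (2 * real Mc * \<sigma>z2\<^sup>2 / (\<eta>\<^sup>2 * C\<^sup>2))"
    using sum_square_mean_abs_le[of K \<delta> B, OF \<open>K \<ge> 1\<close> B] sum_mean_abs_le[of K \<delta> B, OF \<open>K \<ge> 1\<close> B]
      C noise_var
    unfolding a_def by (intro add_mono mult_left_mono order_refl) (auto intro!: sum_nonneg divide_nonneg_nonneg)
  finally show ?thesis
    by (simp add: mult_ac)
qed


lemma reed_rx_eq_rx:
  assumes "m < Mc"
  shows "reed_rx \<eta> c \<mu> K \<Delta> h z \<phi> j m b \<omega> = rx (incr_vec \<omega>) j m b (noise_vec \<omega>)"
  using assms by (simp add: reed_rx_def reed_tx_def rx_def noise_vec_apply incr_vec_def)

lemma reed_error_eq_err: "reed_error \<omega> $ j = err (incr_vec \<omega>) j (noise_vec \<omega>)"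
  by (simp add: reed_error_def reed_est_def ideal_agg_def err_def reed_rx_eq_rx incr_vec_def
      sum_subtractf)

lemma rx_var_nonneg: "m < Mc \<Longrightarrow> 0 \<le> rx_var \<delta> j m b"
  using eta c_nonneg noise_var by (auto simp: rx_var_def branch_part_nonneg intro!: sum_nonneg add_nonneg_nonneg)

lemma integrable_rx_var: "integrable M (\<lambda>\<omega>. rx_var (incr_vec \<omega>) j m b)"
proof -
  have "integrable M (\<lambda>\<omega>. branch_part b ((1 / real K) * (\<Delta> k \<omega> $ j)))" if "k < K" for k
  proof (rule Bochner_Integration.integrable_bound)
    show "integrable M (\<lambda>\<omega>. (1 / real K) * (\<Delta> k \<omega> $ j))"
      using integrable_bounded_linear[OF bounded_linear_vec_nth \<Delta>_integrable[OF that]] by simp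
    have [measurable]: "\<Delta> k \<in> borel_measurable M"
      using measurable_from_subalg[OF subalgebra \<Delta>_measurable[OF that]] .
    show "(\<lambda>\<omega>. branch_part b ((1 / real K) * (\<Delta> k \<omega> $ j))) \<in> borel_measurable M"
      by measurable
    show "AE \<omega> in M. norm (branch_part b ((1 / real K) * (\<Delta> k \<omega> $ j))) \<le> norm ((1 / real K) * (\<Delta> k \<omega> $ j))"
      by (intro AE_I2) (simp only: real_norm_def abs_branch_part_le)
  qed
  then have "integrable M (\<lambda>\<omega>. (\<Sum>k<K. \<eta> * c m * branch_part b ((1 / real K) * (incr_vec \<omega> k $ j))) + \<sigma>z2)"
    by (intro Bochner_Integration.integrable_add Bochner_Integration.integrable_sum integrable_mult_right)
      (auto simp: incr_vec_def)
  then show ?thesis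
    by (simp add: rx_var_def)
qed


lemma nn_integral_power_rx:
  assumes "a \<ge> 0"
  shows "(\<integral>\<^sup>+\<omega>. ennreal (a * (\<Sum>m<Mc. (cmod (rx \<delta> j m b (noise_vec \<omega>)))\<^sup>2)) \<partial>M)
    = ennreal (a * (\<Sum>m<Mc. rx_var \<delta> j m b))"
proof -
  note Y = circular_moments_norm[OF circular_moments_rx, of _ \<delta> j b]
  have "(\<integral>\<^sup>+\<omega>. ennreal (a * (\<Sum>m<Mc. (cmod (rx \<delta> j m b (noise_vec \<omega>)))\<^sup>2)) \<partial>M)
      = ennreal (\<integral>\<omega>. a * (\<Sum>m<Mc. (cmod (rx \<delta> j m b (noise_vec \<omega>)))\<^sup>2) \<partial>M)"
    using Y assms by (intro nn_integral_eq_integral) (auto simp: sum_nonneg)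
  then show ?thesis
    using Y by simp
qed

lemma integral_indicator_power_rx:
  fixes j :: 'd and b :: bool
  assumes A: "A \<in> sets \<G>"
  defines "T \<equiv> \<lambda>\<omega>. indicator A \<omega> * (\<Sum>m<Mc. (cmod (rx (incr_vec \<omega>) j m b (noise_vec \<omega>)))\<^sup>2)"
    and "L \<equiv> \<lambda>\<omega>. indicator A \<omega> * (\<Sum>m<Mc. rx_var (incr_vec \<omega>) j m b)"
  shows "integrable M T" and "(\<integral>\<omega>. T \<omega> \<partial>M) = (\<integral>\<omega>. L \<omega> \<partial>M)"
proof -
  let ?S = "(borel :: real measure) \<Otimes>\<^sub>M incr_space"
  define V where "V \<omega> = (indicator A \<omega> :: real, incr_vec \<omega>)" for \<omega>
  define f where "f p = fst (fst p) * (\<Sum>m<Mc. (cmod (rx (snd (fst p)) j m b (snd p)))\<^sup>2)"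
    for p :: "(real \<times> (nat \<Rightarrow> real^'d)) \<times> ('d noise_idx \<Rightarrow> complex)"
  have V: "V \<in> measurable \<G> ?S"
    unfolding V_def using A incr_vec_measurable by measurable
  have f: "f \<in> borel_measurable (?S \<Otimes>\<^sub>M noise_space)"
  proof -
    have "(\<lambda>p. snd (fst p)) \<in> measurable (?S \<Otimes>\<^sub>M noise_space) incr_space"
      by measurable
    then have "(\<lambda>p. rx (snd (fst p)) j m b (snd p)) \<in> borel_measurable (?S \<Otimes>\<^sub>M noise_space)" if "m < Mc" for m
      using that measurable_compose[OF _ measurable_component_singleton[of _ "{..<K}"]]
      by (intro measurable_rx) (auto simp: chip_idx_def)
    then show ?thesis
      unfolding f_def by (intro borel_measurable_times borel_measurable_sum) auto
  qed
  have T: "T = (\<lambda>\<omega>. f (V \<omega>, noise_vec \<omega>))"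
    by (simp add: T_def f_def V_def)
  have "(\<integral>\<^sup>+\<omega>. ennreal (f (V \<omega>, noise_vec \<omega>)) \<partial>M)
      = (\<integral>\<^sup>+\<omega>. (\<integral>\<^sup>+\<omega>'. ennreal (f (V \<omega>, noise_vec \<omega>')) \<partial>M) \<partial>M)"
    by (rule nn_integral_freeze_noise[OF V]) (use f in measurable)
  also have "\<dots> = (\<integral>\<^sup>+\<omega>. L \<omega> \<partial>M)"
    by (simp add: f_def V_def L_def nn_integral_power_rx)
  finally have nn_eq: "(\<integral>\<^sup>+\<omega>. T \<omega> \<partial>M) = (\<integral>\<^sup>+\<omega>. L \<omega> \<partial>M)"
    by (simp only: T)
  have "T \<in> borel_measurable M"
    unfolding T using measurable_from_subalg[OF subalgebra V] noise_vec_measurable f by measurable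
  moreover have "integrable M L"
    unfolding L_def using A subalgebra integrable_rx_var
    by (intro integrable_real_mult_indicator[unfolded mult.commute[of _ "indicator _ _"]]
        Bochner_Integration.integrable_sum) (auto simp: subalgebra_def)
  moreover have "0 \<le> T \<omega>" and "0 \<le> L \<omega>" for \<omega>
  proof -
    have "0 \<le> (\<Sum>m<Mc. rx_var (incr_vec \<omega>) j m b)"
      by (rule sum_nonneg) (simp add: rx_var_nonneg)
    then show "0 \<le> T \<omega>" and "0 \<le> L \<omega>"
      unfolding T_def L_def by (simp_all add: sum_nonneg)
  qed
  ultimately show "integrable M T" and "(\<integral>\<omega>. T \<omega> \<partial>M) = (\<integral>\<omega>. L \<omega> \<partial>M)"
    using integral_eq_of_nn_integral_eq[OF _ _ _ _ nn_eq] by blast+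
qed

lemma integrable_incr_mean: "integrable M (\<lambda>\<omega>. (1 / real K) * (\<Sum>k<K. incr_vec \<omega> k $ j))"
  using integrable_bounded_linear[OF bounded_linear_vec_nth \<Delta>_integrable]
  by (intro integrable_mult_right Bochner_Integration.integrable_sum) (auto simp: incr_vec_def)

lemma reed_error_component:
  "reed_error \<omega> $ j = (1 / (\<eta> * C)) *
      ((\<Sum>m<Mc. (cmod (rx (incr_vec \<omega>) j m True (noise_vec \<omega>)))\<^sup>2)
        - (\<Sum>m<Mc. (cmod (rx (incr_vec \<omega>) j m False (noise_vec \<omega>)))\<^sup>2))
    - (1 / real K) * (\<Sum>k<K. incr_vec \<omega> k $ j)"
  by (simp add: reed_error_eq_err err_def sum_subtractf)

lemma integral_indicator_reed_error:
  assumes A: "A \<in> sets \<G>"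
  shows "integrable M (\<lambda>\<omega>. indicator A \<omega> * reed_error \<omega> $ j)"
    and "(\<integral>\<omega>. indicator A \<omega> * reed_error \<omega> $ j \<partial>M) = 0"
proof -
  define T where "T b \<omega> = indicator A \<omega> * (\<Sum>m<Mc. (cmod (rx (incr_vec \<omega>) j m b (noise_vec \<omega>)))\<^sup>2)" for b \<omega>
  define L where "L b \<omega> = indicator A \<omega> * (\<Sum>m<Mc. rx_var (incr_vec \<omega>) j m b)" for b \<omega>
  define D where "D \<omega> = indicator A \<omega> * ((1 / real K) * (\<Sum>k<K. incr_vec \<omega> k $ j))" for \<omega>
  have A_M: "A \<in> sets M"
    using A subalgebra by (auto simp: subalgebra_def)
  have T: "integrable M (T b)" "(\<integral>\<omega>. T b \<omega> \<partial>M) = (\<integral>\<omega>. L b \<omega> \<partial>M)" for b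
    unfolding T_def L_def using integral_indicator_power_rx[OF A] by auto
  have L: "integrable M (L b)" for b
    unfolding L_def using A_M integrable_rx_var
    by (intro integrable_real_mult_indicator[unfolded mult.commute[of _ "indicator _ _"]] Bochner_Integration.integrable_sum)
      auto
  have D: "integrable M D"
    unfolding D_def using A_M integrable_incr_mean
    by (rule integrable_real_mult_indicator[unfolded mult.commute[of _ "indicator _ _"]])
  have error: "indicator A \<omega> * reed_error \<omega> $ j = (1 / (\<eta> * C)) * (T True \<omega> - T False \<omega>) - D \<omega>" for \<omega>
    by (simp add: reed_error_component T_def D_def algebra_simps)
  have mean: "(1 / (\<eta> * C)) * (L True \<omega> - L False \<omega>) - D \<omega> = 0" for \<omega>
    using eta C_pos by (simp add: L_def D_def rx_var_diff flip: right_diff_distrib sum_subtractf)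
  show "integrable M (\<lambda>\<omega>. indicator A \<omega> * reed_error \<omega> $ j)"
    unfolding error using T D by simp
  have "(\<integral>\<omega>. indicator A \<omega> * reed_error \<omega> $ j \<partial>M)
      = (1 / (\<eta> * C)) * ((\<integral>\<omega>. L True \<omega> \<partial>M) - (\<integral>\<omega>. L False \<omega> \<partial>M)) - (\<integral>\<omega>. D \<omega> \<partial>M)"
    unfolding error using T D by simp
  also have "\<dots> = (\<integral>\<omega>. (1 / (\<eta> * C)) * (L True \<omega> - L False \<omega>) - D \<omega> \<partial>M)"
    using L D by simp
  finally show "(\<integral>\<omega>. indicator A \<omega> * reed_error \<omega> $ j \<partial>M) = 0"
    by (simp only: mean) simp
qed

lemma integrable_reed_error: "integrable M (\<lambda>\<omega>. reed_error \<omega> $ j)"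
proof -
  have "space M \<in> sets \<G>"
    using subalgebra sets.top[of \<G>] by (simp add: subalgebra_def)
  then show ?thesis
    using integral_indicator_reed_error(1)[of "space M"] by (simp cong: Bochner_Integration.integrable_cong)
qed

lemma AE_real_cond_exp_reed_error:
  assumes F: "subalgebra M F" and F_G: "sets F \<subseteq> sets \<G>"
  shows "AE \<omega> in M. real_cond_exp M F (\<lambda>\<omega>. reed_error \<omega> $ j) \<omega> = 0"
proof -
  interpret F: sigma_finite_subalgebra M F
    using F by (intro finite_measure_subalgebra_is_sigma_finite) unfold_locales
  have "integrable M (\<lambda>\<omega>. reed_error \<omega> $ j)"
    by (rule integrable_reed_error)
  moreover have "(\<integral>\<omega>\<in>A. reed_error \<omega> $ j \<partial>M) = (\<integral>\<omega>\<in>A. 0 \<partial>M)" if "A \<in> sets F" for A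
    using integral_indicator_reed_error(2)[of A] that F_G by (auto simp: set_lebesgue_integral_def)
  ultimately show ?thesis
    by (intro F.real_cond_exp_charact) auto
qed


lemma measurable_err: "(\<lambda>p. err (fst p) j (snd p)) \<in> borel_measurable (incr_space \<Otimes>\<^sub>M noise_space)"
proof -
  have fst: "(\<lambda>p. fst p k) \<in> borel_measurable (incr_space \<Otimes>\<^sub>M noise_space)" if "k < K" for k
    using measurable_compose[OF measurable_fst measurable_component_singleton[of k "{..<K}"]] that by simp
  have snd: "(\<lambda>p. snd p i) \<in> borel_measurable (incr_space \<Otimes>\<^sub>M noise_space)" if "i \<in> I" for i
    by (rule measurable_compose[OF measurable_snd measurable_component_singleton]) (use that in auto)
  have "(\<lambda>p. rx (fst p) j m b (snd p)) \<in> borel_measurable (incr_space \<Otimes>\<^sub>M noise_space)" if "m < Mc" for m b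
    using that by (intro measurable_rx fst snd) (auto simp: chip_idx_def)
  then show ?thesis
    unfolding err_def using fst
    by (intro borel_measurable_diff borel_measurable_times borel_measurable_sum borel_measurable_const
        borel_measurable_power borel_measurable_norm borel_measurable_vec_nth[THEN measurable_compose]) auto
qed

lemma nn_integral_norm_reed_error_le:
  assumes "K \<ge> 1" and bound: "AE \<omega> in M. \<forall>k<K. norm (\<Delta> k \<omega>) \<le> B"
  shows "(\<integral>\<^sup>+\<omega>. ennreal ((norm (reed_error \<omega>))\<^sup>2) \<partial>M)
    \<le> ennreal ((\<Sum>m<Mc. (c m)\<^sup>2) / C\<^sup>2 * B\<^sup>2 + 2 * \<sigma>z2 * sqrt (real CARD('d)) / (\<eta> * C) * B
      + 2 * real CARD('d) * real Mc * \<sigma>z2\<^sup>2 / (\<eta>\<^sup>2 * C\<^sup>2))" (is "_ \<le> ennreal ?bound")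
proof -
  define g where "g p = (\<Sum>j\<in>UNIV. (err (fst p) j (snd p))\<^sup>2)" for p
  define var where "var \<delta> = (\<Sum>j\<in>UNIV. (1 / (\<eta> * C))\<^sup>2 *
      (\<Sum>m<Mc. (rx_var \<delta> j m True)\<^sup>2 + (rx_var \<delta> j m False)\<^sup>2))" for \<delta>
  have g: "(\<lambda>p. ennreal (g p)) \<in> borel_measurable (incr_space \<Otimes>\<^sub>M noise_space)"
    unfolding g_def using measurable_err by measurable
  have inner: "(\<integral>\<^sup>+\<omega>'. ennreal (g (\<delta>, noise_vec \<omega>')) \<partial>M) = ennreal (var \<delta>)" for \<delta>
  proof -
    have "integrable M (\<lambda>\<omega>'. g (\<delta>, noise_vec \<omega>'))"
      unfolding g_def using integral_err_square(1) by auto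
    then show ?thesis
      by (simp add: nn_integral_eq_integral g_def var_def sum_nonneg Bochner_Integration.integral_sum
          integral_err_square)
  qed
  have "(\<integral>\<^sup>+\<omega>. ennreal ((norm (reed_error \<omega>))\<^sup>2) \<partial>M) = (\<integral>\<^sup>+\<omega>. ennreal (g (incr_vec \<omega>, noise_vec \<omega>)) \<partial>M)"
    by (simp add: g_def norm_vec_power2 reed_error_eq_err)
  also have "\<dots> = (\<integral>\<^sup>+\<omega>. (\<integral>\<^sup>+\<omega>'. ennreal (g (incr_vec \<omega>, noise_vec \<omega>')) \<partial>M) \<partial>M)"
    by (rule nn_integral_freeze_noise[OF incr_vec_measurable g])
  also have "\<dots> = (\<integral>\<^sup>+\<omega>. ennreal (var (incr_vec \<omega>)) \<partial>M)"
    by (simp add: inner)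
  also have "\<dots> \<le> (\<integral>\<^sup>+\<omega>. ennreal ?bound \<partial>M)"
  proof (rule nn_integral_mono_AE)
    show "AE \<omega> in M. ennreal (var (incr_vec \<omega>)) \<le> ennreal ?bound"
      using bound
    proof eventually_elim
      case (elim \<omega>)
      then have "\<And>k. k < K \<Longrightarrow> norm (incr_vec \<omega> k) \<le> B"
        by (simp add: incr_vec_def)
      then show ?case
        unfolding var_def by (intro ennreal_leI sum_rx_var_square_le \<open>K \<ge> 1\<close>)
    qed
  qed
  also have "\<dots> = ennreal ?bound"
    by (simp add: emeasure_space_1)
  finally show ?thesis .
qed


end

section \<open>The FedAvg round\<close>

lemma subalgebra_cond_field:
  assumes "subalgebra M Ft" and "\<And>k. k < K \<Longrightarrow> \<Delta> k \<in> borel_measurable M"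
  shows "subalgebra M (cond_field M Ft K \<Delta>)"
proof -
  have gen: "sets Ft \<union> {\<Delta> k -` A \<inter> space M | k A. k < K \<and> A \<in> sets borel} \<subseteq> sets M"
    using assms by (auto simp: subalgebra_def measurable_sets)
  then have "sets Ft \<union> {\<Delta> k -` A \<inter> space M | k A. k < K \<and> A \<in> sets borel} \<subseteq> Pow (space M)"
    using sets.sets_into_space by blast
  then show ?thesis
    using gen sets.sigma_sets_subset[OF gen]
    by (simp add: subalgebra_def cond_field_def space_measure_of_conv sets_measure_of_conv)
qed

lemma sets_subset_cond_field:
  assumes "subalgebra M Ft"
  shows "sets Ft \<subseteq> sets (cond_field M Ft K \<Delta>)"
proof -
  have "sets Ft \<union> {\<Delta> k -` A \<inter> space M | k A. k < K \<and> A \<in> sets borel} \<subseteq> Pow (space M)"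
    using assms sets.sets_into_space[of _ Ft] by (auto simp: subalgebra_def)
  then show ?thesis
    by (auto simp: cond_field_def sets_measure_of_conv)
qed

lemma measurable_cond_field:
  fixes \<Delta> :: "nat \<Rightarrow> 'a \<Rightarrow> real^'d"
  assumes "subalgebra M Ft" and "k < K"
  shows "\<Delta> k \<in> borel_measurable (cond_field M Ft K \<Delta>)"
proof -
  have gen: "sets Ft \<union> {\<Delta> k -` A \<inter> space M | k A. k < K \<and> A \<in> sets borel} \<subseteq> Pow (space M)"
    using assms sets.sets_into_space[of _ Ft] by (auto simp: subalgebra_def)
  show ?thesis
  proof (rule measurableI)
    fix A :: "(real^'d) set" assume "A \<in> sets borel"
    then show "\<Delta> k -` A \<inter> space (cond_field M Ft K \<Delta>) \<in> sets (cond_field M Ft K \<Delta>)"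
      using gen \<open>k < K\<close>
      by (auto simp: cond_field_def space_measure_of_conv sets_measure_of_conv)
  qed (use gen in \<open>simp add: cond_field_def space_measure_of_conv\<close>)
qed

lemma borel_measurable_local_incr:
  "(\<And>q. q < Q \<Longrightarrow> g k q \<in> borel_measurable M) \<Longrightarrow> local_incr \<beta> Q g k \<in> borel_measurable M"
  unfolding local_incr_def[abs_def] by auto

lemma integrable_local_incr:
  "(\<And>q. q < Q \<Longrightarrow> integrable M (g k q)) \<Longrightarrow> integrable M (local_incr \<beta> Q g k)"
  unfolding local_incr_def[abs_def] by (intro integrable_scaleR_right Bochner_Integration.integrable_sum) auto

lemma AE_norm_local_incr_le:
  assumes "\<beta> \<ge> 0" and "\<forall>k<K. \<forall>q<Q. AE \<omega> in M. norm (g k q \<omega>) \<le> G"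
  shows "AE \<omega> in M. \<forall>k<K. norm (local_incr \<beta> Q g k \<omega>) \<le> \<beta> * real Q * G"
proof -
  have "AE \<omega> in M. \<forall>k\<in>{..<K}. \<forall>q\<in>{..<Q}. norm (g k q \<omega>) \<le> G"
    using assms(2) by (simp add: AE_finite_all)
  then show ?thesis
  proof eventually_elim
    case (elim \<omega>)
    show ?case
    proof (intro allI impI)
      fix k assume "k < K"
      have "norm (local_incr \<beta> Q g k \<omega>) \<le> \<beta> * (\<Sum>q<Q. norm (g k q \<omega>))"
        using assms(1) by (simp add: local_incr_def norm_sum mult_left_mono)
      also have "\<dots> \<le> \<beta> * (\<Sum>q<Q. G)"
        using assms(1) elim \<open>k < K\<close> by (intro mult_left_mono sum_mono) auto
      finally show "norm (local_incr \<beta> Q g k \<omega>) \<le> \<beta> * real Q * G"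
        by simp
    qed
  qed
qed

theorem lemma1:
  fixes M :: "'a measure" and Ft :: "'a measure"
    and K Q Mc :: nat and \<beta> \<eta> \<sigma>z2 G :: real
    and \<mu> c :: "nat \<Rightarrow> real"
    and g :: "nat \<Rightarrow> nat \<Rightarrow> 'a \<Rightarrow> real^'d"
    and h :: "nat \<Rightarrow> 'd \<Rightarrow> nat \<Rightarrow> bool \<Rightarrow> 'a \<Rightarrow> complex"
    and z :: "'d \<Rightarrow> nat \<Rightarrow> bool \<Rightarrow> 'a \<Rightarrow> complex"
    and \<phi> :: "nat \<Rightarrow> 'd \<Rightarrow> nat \<Rightarrow> bool \<Rightarrow> 'a \<Rightarrow> real"
  defines "\<Delta> \<equiv> local_incr \<beta> Q g"
  defines "\<epsilon> \<equiv> (\<lambda>\<omega>. reed_est \<eta> Mc c \<mu> K \<Delta> h z \<phi> \<omega> - ideal_agg K \<Delta> \<omega>)"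
  defines "C \<equiv> (\<Sum>m<Mc. c m)"
  defines "d \<equiv> real CARD('d)"
  assumes P: "prob_space M"
    and Ft: "subalgebra M Ft"
    and K: "K \<ge> 1"
    and beta: "\<beta> > 0"
    and eta: "\<eta> > 0"
    and sz: "\<sigma>z2 > 0"
    and mu: "\<And>k. k < K \<Longrightarrow> \<mu> k > 0"
    and Mc: "Mc \<ge> 1"
    and c_nonneg: "\<And>m. m < Mc \<Longrightarrow> c m \<ge> 0"
    and C_pos: "C > 0"
    and g_meas: "\<And>k q. k < K \<Longrightarrow> q < Q \<Longrightarrow> g k q \<in> borel_measurable M"
    and g_int: "\<And>k q. k < K \<Longrightarrow> q < Q \<Longrightarrow> integrable M (g k q)"
    and h_dist: "\<And>k j m b. k < K \<Longrightarrow> m < Mc \<Longrightarrow> is_CN M ((\<mu> k)\<^sup>2) (h k j m b)"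
    and z_dist: "\<And>j m b. m < Mc \<Longrightarrow> is_CN M \<sigma>z2 (z j m b)"
    and phi_dist: "\<And>k j m b. k < K \<Longrightarrow> m < Mc \<Longrightarrow> is_unif_phase M (\<phi> k j m b)"
    and indep: "prob_space.indep_sets M
                  (\<lambda>i. case i of
                         None \<Rightarrow> sets (cond_field M Ft K \<Delta>)
                       | Some n \<Rightarrow> {noise_family h z \<phi> n -` A \<inter> space M | A. A \<in> sets borel})
                  (insert None (Some ` noise_idx_set K Mc))"
  shows "(\<forall>j. integrable M (\<lambda>\<omega>. \<epsilon> \<omega> $ j)
              \<and> (AE \<omega> in M. real_cond_exp M (cond_field M Ft K \<Delta>) (\<lambda>\<omega>. \<epsilon> \<omega> $ j) \<omega> = 0)
              \<and> (AE \<omega> in M. real_cond_exp M Ft (\<lambda>\<omega>. \<epsilon> \<omega> $ j) \<omega> = 0))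
       \<and> ((\<forall>k<K. \<forall>q<Q. AE \<omega> in M. norm (g k q \<omega>) \<le> G) \<longrightarrow>
            (\<integral>\<^sup>+ \<omega>. ennreal ((norm (\<epsilon> \<omega>))\<^sup>2) \<partial>M)
              \<le> ennreal ((\<Sum>m<Mc. (c m)\<^sup>2) / C\<^sup>2 * (\<beta> * real Q * G)\<^sup>2
                         + 2 * \<sigma>z2 * sqrt d / (\<eta> * C) * (\<beta> * real Q * G)
                         + 2 * d * real Mc * \<sigma>z2\<^sup>2 / (\<eta>\<^sup>2 * C\<^sup>2)))"
proof -
  interpret prob_space M
    by (rule P)
  interpret reed_channel M "cond_field M Ft K \<Delta>" K Mc \<eta> \<sigma>z2 \<mu> c \<Delta> h z \<phi>
    using Ft eta sz mu c_nonneg C_pos h_dist z_dist phi_dist indep g_meas g_int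
    by unfold_locales (auto simp: \<Delta>_def C_def is_unif_phase_def distributed_def subalgebra_cond_field
        measurable_cond_field borel_measurable_local_incr integrable_local_incr)
  have "\<epsilon> = reed_error"
    by (simp add: \<epsilon>_def reed_error_def fun_eq_iff)
  moreover have "integrable M (\<lambda>\<omega>. reed_error \<omega> $ j)
      \<and> (AE \<omega> in M. real_cond_exp M (cond_field M Ft K \<Delta>) (\<lambda>\<omega>. reed_error \<omega> $ j) \<omega> = 0)
      \<and> (AE \<omega> in M. real_cond_exp M Ft (\<lambda>\<omega>. reed_error \<omega> $ j) \<omega> = 0)" for j
    using integrable_reed_error AE_real_cond_exp_reed_error[OF subalgebra order_refl]
      AE_real_cond_exp_reed_error[OF Ft sets_subset_cond_field[OF Ft]] by blast
  moreover have "AE \<omega> in M. \<forall>k<K. norm (\<Delta> k \<omega>) \<le> \<beta> * real Q * G"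
    if "\<forall>k<K. \<forall>q<Q. AE \<omega> in M. norm (g k q \<omega>) \<le> G"
    using that beta unfolding \<Delta>_def by (intro AE_norm_local_incr_le) auto
  ultimately show ?thesis
    unfolding C_def d_def using nn_integral_norm_reed_error_le[OF K] by blast
qed

end
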